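(* Let $j\in\{\tfrac12,1,\tfrac32,\dots\}$, $\Delta>1$, $b\ge 1$, $1\le y\le b$, and let $\vec B=(B_1,B_2,B_3)\in\mathbb R^3$ with $B_1^2+B_2^2>0$. Consider on $\bigotimes_{x=1}^b\mathbb C^{2j+1}$ the operator $$H^{+-}(\vec B)=-\sum_{x=1}^{b-1}\Big[\tfrac1\Delta\big(S^1_xS^1_{x+1}+S^2_xS^2_{x+1}\big)+S^3_xS^3_{x+1}-j^2\mathbf 1\Big]-jA\,(S^3_1-S^3_b)+B_1S^1_y+B_2S^2_y+B_3S^3_y .$$ Then the ground state of $H^{+-}(\vec B)$ is (up to scalar multiples) the product state $\psi(z)=\bigotimes_{x=1}^b\chi_x(z)$ with $$z=-\frac{\|\vec B\|+B_3}{B_1-iB_2}\,q^{y},$$ and the ground state energy is $-j\|\vec B\|$.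
   Context: Each site carries $\mathbb C^{2j+1}$ with the spin-$j$ representation $S^1,S^2,S^3$ satisfying $[S^\alpha,S^\beta]=i\epsilon^{\alpha\beta\gamma}S^\gamma$; $S^\alpha_x$ denotes the copy acting on site $x$. Let $|m\rangle$, $m\in\{-j,-j+1,\dots,j\}$, be the standard basis with $S^3|m\rangle=m|m\rangle$ and $S^{\pm}=S^1\pm iS^2$ acting as $S^\pm|m\rangle=\sqrt{j(j+1)-m(m\pm1)}\,|m\pm1\rangle$. Set $A=\sqrt{1-\Delta^{-2}}$, and let $0<q<1$ be defined by $q+q^{-1}=2\Delta$. Put $w_m=\sqrt{\binom{2j}{m+j}}$ and, for $z\in\mathbb C$ and site $x$, $$\chi_x(z)=(1+|z|^2q^{-2x})^{-j}\sum_{m=-j}^{j}(zq^{-x})^{j-m}\,w_m\,|m\rangle .$$ $\|\vec B\|$ is the Euclidean norm of $\vec B$. *)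

theory Defs
  imports Complex_Main "HOL-Library.FuncSet"
begin

text \<open>Spin j = n/2 with n = 2j a positive natural number. The basis vector |m> of
  a single site is indexed by k = m + j in {0..n}. A basis configuration of the chain
  of b sites is a function sigma in PiE {1..b} (\<lambda>_. {0..n}); vectors of the tensor
  product are functions from configurations to complex numbers (only the values on
  configurations matter).\<close>

type_synonym cfg = "nat \<Rightarrow> nat"
type_synonym vec = "cfg \<Rightarrow> complex"

definition configs :: "nat \<Rightarrow> nat \<Rightarrow> cfg set" where
  "configs n b = PiE {1..b} (\<lambda>_. {0..n})"

definition spin_j :: "nat \<Rightarrow> real" where
  "spin_j n = real n / 2"

definition mval :: "nat \<Rightarrow> nat \<Rightarrow> real" where
  "mval n k = real k - spin_j n"

definition S3m :: "nat \<Rightarrow> nat \<Rightarrow> nat \<Rightarrow> complex" where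
  "S3m n k' k = (if k' = k then complex_of_real (mval n k) else 0)"

definition Spm :: "nat \<Rightarrow> nat \<Rightarrow> nat \<Rightarrow> complex" where
  "Spm n k' k = (if k' = k + 1 then complex_of_real
      (sqrt (spin_j n * (spin_j n + 1) - mval n k * (mval n k + 1))) else 0)"

definition Smm :: "nat \<Rightarrow> nat \<Rightarrow> nat \<Rightarrow> complex" where
  "Smm n k' k = (if k = k' + 1 then complex_of_real
      (sqrt (spin_j n * (spin_j n + 1) - mval n k * (mval n k - 1))) else 0)"

definition S1m :: "nat \<Rightarrow> nat \<Rightarrow> nat \<Rightarrow> complex" where
  "S1m n k' k = (Spm n k' k + Smm n k' k) / 2"

definition S2m :: "nat \<Rightarrow> nat \<Rightarrow> nat \<Rightarrow> complex" where
  "S2m n k' k = (Spm n k' k - Smm n k' k) / (2 * \<i>)"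

definition site_op :: "nat \<Rightarrow> (nat \<Rightarrow> nat \<Rightarrow> complex) \<Rightarrow> nat \<Rightarrow> vec \<Rightarrow> vec" where
  "site_op n M x v = (\<lambda>\<sigma>. \<Sum>k\<in>{0..n}. M (\<sigma> x) k * v (\<sigma>(x := k)))"

abbreviation S1 where "S1 n x \<equiv> site_op n (S1m n) x"
abbreviation S2 where "S2 n x \<equiv> site_op n (S2m n) x"
abbreviation S3 where "S3 n x \<equiv> site_op n (S3m n) x"

definition Aconst :: "real \<Rightarrow> real" where
  "Aconst \<Delta> = sqrt (1 - 1 / \<Delta>\<^sup>2)"

definition qpar :: "real \<Rightarrow> real" where
  "qpar \<Delta> = (THE q. 0 < q \<and> q < 1 \<and> q + 1 / q = 2 * \<Delta>)"

definition Hpm :: "nat \<Rightarrow> real \<Rightarrow> nat \<Rightarrow> nat \<Rightarrow> real \<Rightarrow> real \<Rightarrow> real \<Rightarrow> vec \<Rightarrow> vec" where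
  "Hpm n \<Delta> b y B1 B2 B3 v = (\<lambda>\<sigma>.
     - (\<Sum>x\<in>{1..<b}.
          complex_of_real (1 / \<Delta>) *
            (S1 n x (S1 n (x + 1) v) \<sigma> + S2 n x (S2 n (x + 1) v) \<sigma>)
          + S3 n x (S3 n (x + 1) v) \<sigma>
          - complex_of_real ((spin_j n)\<^sup>2) * v \<sigma>)
     - complex_of_real (spin_j n * Aconst \<Delta>) * (S3 n 1 v \<sigma> - S3 n b v \<sigma>)
     + complex_of_real B1 * S1 n y v \<sigma>
     + complex_of_real B2 * S2 n y v \<sigma>
     + complex_of_real B3 * S3 n y v \<sigma>)"

definition wcoef :: "nat \<Rightarrow> nat \<Rightarrow> real" where
  "wcoef n k = sqrt (real (n choose k))"

definition chi :: "nat \<Rightarrow> real \<Rightarrow> nat \<Rightarrow> complex \<Rightarrow> nat \<Rightarrow> complex" where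
  "chi n q x z k = complex_of_real ((1 + (cmod z)\<^sup>2 * (1 / q) ^ (2 * x)) powr (- spin_j n))
      * (z * complex_of_real ((1 / q) ^ x)) ^ (n - k) * complex_of_real (wcoef n k)"

definition psi :: "nat \<Rightarrow> real \<Rightarrow> nat \<Rightarrow> complex \<Rightarrow> vec" where
  "psi n q b z = (\<lambda>\<sigma>. if \<sigma> \<in> configs n b then (\<Prod>x\<in>{1..b}. chi n q x z (\<sigma> x)) else 0)"

definition normB :: "real \<Rightarrow> real \<Rightarrow> real \<Rightarrow> real" where
  "normB B1 B2 B3 = sqrt (B1\<^sup>2 + B2\<^sup>2 + B3\<^sup>2)"

definition in_space :: "nat \<Rightarrow> nat \<Rightarrow> vec \<Rightarrow> bool" where
  "in_space n b v \<longleftrightarrow> (\<forall>\<sigma>. \<sigma> \<notin> configs n b \<longrightarrow> v \<sigma> = 0)"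

definition is_eigen :: "nat \<Rightarrow> nat \<Rightarrow> (vec \<Rightarrow> vec) \<Rightarrow> complex \<Rightarrow> vec \<Rightarrow> bool" where
  "is_eigen n b H ev v \<longleftrightarrow> in_space n b v \<and> (\<exists>\<sigma>\<in>configs n b. v \<sigma> \<noteq> 0)
      \<and> (\<forall>\<sigma>\<in>configs n b. H v \<sigma> = ev * v \<sigma>)"

end

theory Submission
  imports Defs "HOL-Library.Complex_Order"
begin

(* The vector psi(z) is a product of spin coherent vectors chi_x with parameters z q^(-x). Every
   single-site spin matrix acts on such a product as a multiplier depending only on the local basis
   index, so H psi can be evaluated term by term. Because 2 Delta = q + 1/q, each XXZ bond term
   reduces on psi to -jA (S^3_x - S^3_(x+1)); these telescope against the boundary term -jA (S^3_1 - S^3_b).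
   For the chosen z the coherent vector at the field site is the lowest-weight eigenvector of B.S,
   with eigenvalue -j|B|. Hence H psi = -j|B| psi.

   To show that this is the ground state, write H as a Hermitian matrix in the product basis. The
   components of psi never vanish. After conjugating by the phases of psi, every off-diagonal entry
   becomes real and nonpositive: the XY hopping conserves the power of z, and beta z < 0 for the
   transverse field. The ground-state-transformation identity
     <v, H v> - E |v|^2 = 1/2 sum |w(s,t)| |v_t/psi_t - v_s/psi_s|^2
   then shows that no eigenvalue lies below E. For an eigenvector with eigenvalue E, v/psi is
   constant along every nonzero entry. These entries connect each configuration to the all-up one:
   either lower the deviation at the field site, or move it one step towards that site. So the
   ground state is unique. *)

section \<open>Ground states of gauge-stoquastic matrices\<close>

lemma cmod_diff_power2: "(cmod (a - b))\<^sup>2 = (cmod a)\<^sup>2 + (cmod b)\<^sup>2 - 2 * Re (cnj b * a)"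
  unfolding cmod_power2 by (simp add: power2_eq_square algebra_simps)

lemma cnj_mult_self: "cnj u * u = complex_of_real ((cmod u)\<^sup>2)"
  by (metis complex_norm_square mult.commute)

lemma nonneg_cnj_iff: "0 \<le> cnj w \<longleftrightarrow> 0 \<le> (w :: complex)"
  by (auto simp: less_eq_complex_def)

lemma nonpos_cnj_iff: "cnj w \<le> 0 \<longleftrightarrow> (w :: complex) \<le> 0"
  by (auto simp: less_eq_complex_def)

lemma Re_pos_if_nonneg_nonzero: "0 \<le> w \<Longrightarrow> w \<noteq> 0 \<Longrightarrow> 0 < Re (w :: complex)"
  by (auto simp: less_eq_complex_def complex_eq_iff)

lemma Re_neg_if_nonpos_nonzero: "w \<le> 0 \<Longrightarrow> w \<noteq> 0 \<Longrightarrow> Re (w :: complex) < 0"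
  by (auto simp: less_eq_complex_def complex_eq_iff)

lemma symmetric_form_eq_dirichlet_form:
  fixes w :: "'a \<Rightarrow> 'a \<Rightarrow> real" and f :: "'a \<Rightarrow> complex"
  assumes "\<And>\<sigma> \<tau>. \<sigma> \<in> C \<Longrightarrow> \<tau> \<in> C \<Longrightarrow> w \<tau> \<sigma> = w \<sigma> \<tau>"
  shows "(\<Sum>\<sigma>\<in>C. \<Sum>\<tau>\<in>C. w \<sigma> \<tau> * (Re (cnj (f \<sigma>) * f \<tau>) - (cmod (f \<sigma>))\<^sup>2))
    = (\<Sum>\<sigma>\<in>C. \<Sum>\<tau>\<in>C. - w \<sigma> \<tau> / 2 * (cmod (f \<tau> - f \<sigma>))\<^sup>2)"
proof -
  define X where "X = (\<Sum>\<sigma>\<in>C. \<Sum>\<tau>\<in>C. w \<sigma> \<tau> * (Re (cnj (f \<sigma>) * f \<tau>) - (cmod (f \<sigma>))\<^sup>2))"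
  have "X = (\<Sum>\<tau>\<in>C. \<Sum>\<sigma>\<in>C. w \<tau> \<sigma> * (Re (cnj (f \<tau>) * f \<sigma>) - (cmod (f \<tau>))\<^sup>2))"
    unfolding X_def by simp
  also have "\<dots> = (\<Sum>\<tau>\<in>C. \<Sum>\<sigma>\<in>C. w \<sigma> \<tau> * (Re (cnj (f \<sigma>) * f \<tau>) - (cmod (f \<tau>))\<^sup>2))"
    using assms by (intro sum.cong refl) (simp add: mult.commute)
  also have "\<dots> = (\<Sum>\<sigma>\<in>C. \<Sum>\<tau>\<in>C. w \<sigma> \<tau> * (Re (cnj (f \<sigma>) * f \<tau>) - (cmod (f \<tau>))\<^sup>2))"
    by (rule sum.swap)
  finally have "2 * X = (\<Sum>\<sigma>\<in>C. \<Sum>\<tau>\<in>C. w \<sigma> \<tau> * (Re (cnj (f \<sigma>) * f \<tau>) - (cmod (f \<sigma>))\<^sup>2)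
       + w \<sigma> \<tau> * (Re (cnj (f \<sigma>) * f \<tau>) - (cmod (f \<tau>))\<^sup>2))"
    unfolding X_def by (simp add: sum.distrib)
  also have "\<dots> = (\<Sum>\<sigma>\<in>C. \<Sum>\<tau>\<in>C. - w \<sigma> \<tau> * (cmod (f \<tau> - f \<sigma>))\<^sup>2)"
    by (intro sum.cong refl) (simp add: cmod_diff_power2 algebra_simps)
  finally have "X = (\<Sum>\<sigma>\<in>C. \<Sum>\<tau>\<in>C. - w \<sigma> \<tau> * (cmod (f \<tau> - f \<sigma>))\<^sup>2) / 2"
    by simp
  then show ?thesis
    unfolding X_def by (simp add: sum_divide_distrib)
qed

text \<open>The order on complex numbers is the one of HOL-Library.Complex_Order: \<open>w \<le> 0\<close> means that
  \<open>w\<close> is real and nonpositive.\<close>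

locale gauge_stoquastic =
  fixes C :: "'a set" and K :: "'a \<Rightarrow> 'a \<Rightarrow> complex" and \<psi> :: "'a \<Rightarrow> complex" and E :: real
  assumes finite_C: "finite C"
    and \<psi>_nonzero: "\<sigma> \<in> C \<Longrightarrow> \<psi> \<sigma> \<noteq> 0"
    and \<psi>_eigen: "\<sigma> \<in> C \<Longrightarrow> (\<Sum>\<tau>\<in>C. K \<sigma> \<tau> * \<psi> \<tau>) = of_real E * \<psi> \<sigma>"
    and K_hermitian: "\<sigma> \<in> C \<Longrightarrow> \<tau> \<in> C \<Longrightarrow> K \<tau> \<sigma> = cnj (K \<sigma> \<tau>)"
    and gauged_off_diag_nonpos: "\<sigma> \<in> C \<Longrightarrow> \<tau> \<in> C \<Longrightarrow> \<sigma> \<noteq> \<tau> \<Longrightarrow> cnj (\<psi> \<sigma>) * K \<sigma> \<tau> * \<psi> \<tau> \<le> 0"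
begin

definition weight :: "'a \<Rightarrow> 'a \<Rightarrow> real" where
  "weight \<sigma> \<tau> = Re (cnj (\<psi> \<sigma>) * K \<sigma> \<tau> * \<psi> \<tau>)"

lemma weight_sym: "\<sigma> \<in> C \<Longrightarrow> \<tau> \<in> C \<Longrightarrow> weight \<tau> \<sigma> = weight \<sigma> \<tau>"
  unfolding weight_def by (simp add: K_hermitian[of \<sigma> \<tau>] algebra_simps)

lemma weight_nonpos: "\<sigma> \<in> C \<Longrightarrow> \<tau> \<in> C \<Longrightarrow> \<sigma> \<noteq> \<tau> \<Longrightarrow> weight \<sigma> \<tau> \<le> 0"
  using gauged_off_diag_nonpos unfolding weight_def less_eq_complex_def by simp

lemma energy_identity:
  "Re (\<Sum>\<sigma>\<in>C. cnj (v \<sigma>) * (\<Sum>\<tau>\<in>C. K \<sigma> \<tau> * v \<tau>)) - E * (\<Sum>\<sigma>\<in>C. (cmod (v \<sigma>))\<^sup>2)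
     = (\<Sum>\<sigma>\<in>C. \<Sum>\<tau>\<in>C. - weight \<sigma> \<tau> / 2 * (cmod (v \<tau> / \<psi> \<tau> - v \<sigma> / \<psi> \<sigma>))\<^sup>2)"
proof -
  define f where "f \<sigma> = v \<sigma> / \<psi> \<sigma>" for \<sigma>
  have v_eq: "v \<sigma> = \<psi> \<sigma> * f \<sigma>" if "\<sigma> \<in> C" for \<sigma>
    using \<psi>_nonzero that unfolding f_def by simp
  \<comment> \<open>the gauged entries are real off the diagonal, and on it they are multiplied by zero\<close>
  have gauged_real: "cnj (\<psi> \<sigma>) * K \<sigma> \<tau> * \<psi> \<tau> * (f \<tau> - f \<sigma>) = of_real (weight \<sigma> \<tau>) * (f \<tau> - f \<sigma>)"
    if "\<sigma> \<in> C" "\<tau> \<in> C" for \<sigma> \<tau>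
  proof (cases "\<sigma> = \<tau>")
    case False
    then show ?thesis
      using gauged_off_diag_nonpos[OF that False] unfolding weight_def less_eq_complex_def
      by (simp add: complex_eq_iff)
  qed simp
  have row: "cnj (v \<sigma>) * (\<Sum>\<tau>\<in>C. K \<sigma> \<tau> * v \<tau>) - of_real E * (cnj (v \<sigma>) * v \<sigma>)
      = (\<Sum>\<tau>\<in>C. of_real (weight \<sigma> \<tau>) * (cnj (f \<sigma>) * (f \<tau> - f \<sigma>)))" if \<sigma>: "\<sigma> \<in> C" for \<sigma>
  proof -
    have "(\<Sum>\<tau>\<in>C. of_real (weight \<sigma> \<tau>) * (cnj (f \<sigma>) * (f \<tau> - f \<sigma>)))
        = (\<Sum>\<tau>\<in>C. cnj (f \<sigma>) * (cnj (\<psi> \<sigma>) * K \<sigma> \<tau> * \<psi> \<tau> * (f \<tau> - f \<sigma>)))"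
      by (rule sum.cong[OF refl]) (simp add: gauged_real[OF \<sigma>])
    also have "\<dots> = cnj (f \<sigma>) * cnj (\<psi> \<sigma>) * (\<Sum>\<tau>\<in>C. K \<sigma> \<tau> * (\<psi> \<tau> * f \<tau>))
        - cnj (f \<sigma>) * cnj (\<psi> \<sigma>) * f \<sigma> * (\<Sum>\<tau>\<in>C. K \<sigma> \<tau> * \<psi> \<tau>)"
      by (simp add: sum_distrib_left sum_subtractf algebra_simps)
    also have "\<dots> = cnj (v \<sigma>) * (\<Sum>\<tau>\<in>C. K \<sigma> \<tau> * v \<tau>) - of_real E * (cnj (v \<sigma>) * v \<sigma>)"
      using \<psi>_eigen \<sigma> v_eq by (simp add: algebra_simps)
    finally show ?thesis by simp
  qed
  have "Re (\<Sum>\<sigma>\<in>C. cnj (v \<sigma>) * (\<Sum>\<tau>\<in>C. K \<sigma> \<tau> * v \<tau>)) - E * (\<Sum>\<sigma>\<in>C. (cmod (v \<sigma>))\<^sup>2)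
      = Re (\<Sum>\<sigma>\<in>C. cnj (v \<sigma>) * (\<Sum>\<tau>\<in>C. K \<sigma> \<tau> * v \<tau>) - of_real E * (cnj (v \<sigma>) * v \<sigma>))"
    by (simp add: sum_subtractf cnj_mult_self sum_distrib_left)
  also have "\<dots> = Re (\<Sum>\<sigma>\<in>C. \<Sum>\<tau>\<in>C. of_real (weight \<sigma> \<tau>) * (cnj (f \<sigma>) * (f \<tau> - f \<sigma>)))"
    using row by (simp cong: sum.cong)
  also have "\<dots> = (\<Sum>\<sigma>\<in>C. \<Sum>\<tau>\<in>C. weight \<sigma> \<tau> * (Re (cnj (f \<sigma>) * f \<tau>) - (cmod (f \<sigma>))\<^sup>2))"
    unfolding cmod_power2 by (simp add: algebra_simps power2_eq_square)
  also have "\<dots> = (\<Sum>\<sigma>\<in>C. \<Sum>\<tau>\<in>C. - weight \<sigma> \<tau> / 2 * (cmod (f \<tau> - f \<sigma>))\<^sup>2)"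
    using weight_sym by (rule symmetric_form_eq_dirichlet_form)
  finally show ?thesis unfolding f_def .
qed

lemma quadratic_form_eigen:
  assumes "\<And>\<sigma>. \<sigma> \<in> C \<Longrightarrow> (\<Sum>\<tau>\<in>C. K \<sigma> \<tau> * v \<tau>) = e * v \<sigma>"
  shows "Re (\<Sum>\<sigma>\<in>C. cnj (v \<sigma>) * (\<Sum>\<tau>\<in>C. K \<sigma> \<tau> * v \<tau>)) = Re e * (\<Sum>\<sigma>\<in>C. (cmod (v \<sigma>))\<^sup>2)"
proof -
  have "(\<Sum>\<sigma>\<in>C. cnj (v \<sigma>) * (\<Sum>\<tau>\<in>C. K \<sigma> \<tau> * v \<tau>)) = e * of_real (\<Sum>\<sigma>\<in>C. (cmod (v \<sigma>))\<^sup>2)"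
    using assms by (simp add: sum_distrib_left complex_mult_cnj cmod_power2 algebra_simps)
  then show ?thesis by simp
qed

lemma energy_terms_nonneg:
  "\<sigma> \<in> C \<Longrightarrow> \<tau> \<in> C \<Longrightarrow> 0 \<le> - weight \<sigma> \<tau> / 2 * (cmod (v \<tau> / \<psi> \<tau> - v \<sigma> / \<psi> \<sigma>))\<^sup>2"
  by (cases "\<sigma> = \<tau>") (simp_all add: weight_nonpos mult_nonpos_nonneg)

lemma eigenvalue_ge:
  assumes eigen: "\<And>\<sigma>. \<sigma> \<in> C \<Longrightarrow> (\<Sum>\<tau>\<in>C. K \<sigma> \<tau> * v \<tau>) = e * v \<sigma>"
    and nonzero: "\<exists>\<sigma>\<in>C. v \<sigma> \<noteq> 0"
  shows "E \<le> Re e"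
proof -
  let ?S = "\<Sum>\<sigma>\<in>C. (cmod (v \<sigma>))\<^sup>2"
  obtain \<sigma> where "\<sigma> \<in> C" "v \<sigma> \<noteq> 0" using nonzero by blast
  then have "?S > 0"
    using finite_C by (intro sum_pos2[of C \<sigma>]) auto
  moreover have "(Re e - E) * ?S \<ge> 0"
    using energy_identity[of v] quadratic_form_eigen[OF eigen] energy_terms_nonneg
    by (simp add: left_diff_distrib sum_nonneg)
  ultimately show ?thesis by (simp add: zero_le_mult_iff)
qed

lemma ground_state_ratio_eq:
  assumes eigen: "\<And>\<sigma>. \<sigma> \<in> C \<Longrightarrow> (\<Sum>\<tau>\<in>C. K \<sigma> \<tau> * v \<tau>) = of_real E * v \<sigma>"
    and \<sigma>: "\<sigma> \<in> C" and \<tau>: "\<tau> \<in> C" and neg: "weight \<sigma> \<tau> < 0"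
  shows "v \<tau> / \<psi> \<tau> = v \<sigma> / \<psi> \<sigma>"
proof -
  let ?t = "\<lambda>\<sigma> \<tau>. - weight \<sigma> \<tau> / 2 * (cmod (v \<tau> / \<psi> \<tau> - v \<sigma> / \<psi> \<sigma>))\<^sup>2"
  have "(\<Sum>\<sigma>\<in>C. \<Sum>\<tau>\<in>C. ?t \<sigma> \<tau>) = 0"
    using energy_identity[of v] quadratic_form_eigen[OF eigen] by simp
  then have "?t \<sigma> \<tau> = 0"
    using finite_C energy_terms_nonneg \<sigma> \<tau> by (simp add: sum_nonneg_eq_0_iff sum_nonneg)
  then show ?thesis using neg by simp
qed

lemma ground_state_proportional:
  fixes r :: 'a and D :: "'a \<Rightarrow> nat"
  assumes eigen: "\<And>\<sigma>. \<sigma> \<in> C \<Longrightarrow> (\<Sum>\<tau>\<in>C. K \<sigma> \<tau> * v \<tau>) = of_real E * v \<sigma>"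
    and descent: "\<And>\<sigma>. \<sigma> \<in> C \<Longrightarrow> \<sigma> \<noteq> r \<Longrightarrow> \<exists>\<tau>\<in>C. weight \<sigma> \<tau> < 0 \<and> D \<tau> < D \<sigma>"
  shows "\<forall>\<sigma>\<in>C. v \<sigma> = v r / \<psi> r * \<psi> \<sigma>"
proof
  fix \<sigma> assume "\<sigma> \<in> C"
  then have "v \<sigma> / \<psi> \<sigma> = v r / \<psi> r"
  proof (induction "D \<sigma>" arbitrary: \<sigma> rule: less_induct)
    case less
    show ?case
    proof (cases "\<sigma> = r")
      case False
      then obtain \<tau> where "\<tau> \<in> C" "weight \<sigma> \<tau> < 0" "D \<tau> < D \<sigma>"
        using descent less.prems by blast
      then show ?thesis
        using less.hyps ground_state_ratio_eq[OF eigen less.prems] by metis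
    qed simp
  qed
  with \<psi>_nonzero[OF \<open>\<sigma> \<in> C\<close>] show "v \<sigma> = v r / \<psi> r * \<psi> \<sigma>"
    by (simp add: field_simps)
qed

end

lemma configs_upd:
  assumes "\<sigma> \<in> configs n b" "x \<in> {1..b}" "k \<le> n"
  shows "\<sigma>(x := k) \<in> configs n b"
  using assms unfolding configs_def by (auto simp: PiE_iff extensional_def)

lemma configs_le: "\<sigma> \<in> configs n b \<Longrightarrow> x \<in> {1..b} \<Longrightarrow> \<sigma> x \<le> n"
  unfolding configs_def by (auto simp: PiE_iff)

lemma finite_configs: "finite (configs n b)"
  unfolding configs_def by (simp add: finite_PiE)

lemma configs_eqI:
  assumes "\<sigma> \<in> configs n b" "\<tau> \<in> configs n b" "\<And>x. x \<in> {1..b} \<Longrightarrow> \<sigma> x = \<tau> x"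
  shows "\<sigma> = \<tau>"
  using assms unfolding configs_def by (metis PiE_ext)

definition agree_outside :: "nat set \<Rightarrow> cfg \<Rightarrow> cfg \<Rightarrow> bool" where
  "agree_outside X \<sigma> \<tau> \<longleftrightarrow> (\<forall>x. x \<notin> X \<longrightarrow> \<sigma> x = \<tau> x)"

lemma agree_outside_upd: "agree_outside {x} \<sigma> \<tau> \<Longrightarrow> \<tau> = \<sigma>(x := \<tau> x)"
  unfolding agree_outside_def by (auto simp: fun_eq_iff)

lemma agree_outside_sym: "agree_outside X \<sigma> \<tau> = agree_outside X \<tau> \<sigma>"
  unfolding agree_outside_def by auto

definition site_kernel :: "(nat \<Rightarrow> nat \<Rightarrow> complex) \<Rightarrow> nat \<Rightarrow> cfg \<Rightarrow> cfg \<Rightarrow> complex" where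
  "site_kernel M x \<sigma> \<tau> = (if agree_outside {x} \<sigma> \<tau> then M (\<sigma> x) (\<tau> x) else 0)"

definition bond_kernel ::
    "(nat \<Rightarrow> nat \<Rightarrow> complex) \<Rightarrow> (nat \<Rightarrow> nat \<Rightarrow> complex) \<Rightarrow> nat \<Rightarrow> cfg \<Rightarrow> cfg \<Rightarrow> complex" where
  "bond_kernel M M' x \<sigma> \<tau> =
     (if agree_outside {x, x + 1} \<sigma> \<tau> then M (\<sigma> x) (\<tau> x) * M' (\<sigma> (x + 1)) (\<tau> (x + 1)) else 0)"

lemma site_op_eq_kernel_sum:
  assumes "\<sigma> \<in> configs n b" "x \<in> {1..b}"
  shows "site_op n M x v \<sigma> = (\<Sum>\<tau>\<in>configs n b. site_kernel M x \<sigma> \<tau> * v \<tau>)"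
proof -
  let ?S = "(\<lambda>k. \<sigma>(x := k)) ` {0..n}"
  have "?S \<subseteq> configs n b" using configs_upd assms by auto
  moreover have "site_kernel M x \<sigma> \<tau> = 0" if "\<tau> \<in> configs n b - ?S" for \<tau>
  proof -
    have "\<tau> \<noteq> \<sigma>(x := \<tau> x)"
      using that configs_le[of \<tau> n b x] assms(2) by auto
    then show ?thesis unfolding site_kernel_def using agree_outside_upd by metis
  qed
  ultimately have "(\<Sum>\<tau>\<in>configs n b. site_kernel M x \<sigma> \<tau> * v \<tau>) = (\<Sum>\<tau>\<in>?S. site_kernel M x \<sigma> \<tau> * v \<tau>)"
    by (intro sum.mono_neutral_right finite_configs) auto
  also have "\<dots> = (\<Sum>k\<in>{0..n}. site_kernel M x \<sigma> (\<sigma>(x := k)) * v (\<sigma>(x := k)))"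
    by (rule sum.reindex_cong[where l = "\<lambda>k. \<sigma>(x := k)"]) (auto simp: inj_on_def fun_eq_iff)
  also have "\<dots> = site_op n M x v \<sigma>"
    unfolding site_op_def site_kernel_def agree_outside_def by simp
  finally show ?thesis by simp
qed

lemma site_kernel_compose:
  assumes "\<sigma> \<in> configs n b" "\<rho> \<in> configs n b" "x \<in> {1..b}"
  shows "(\<Sum>\<tau>\<in>configs n b. site_kernel M x \<sigma> \<tau> * site_kernel M' (x + 1) \<tau> \<rho>) = bond_kernel M M' x \<sigma> \<rho>"
proof -
  \<comment> \<open>the only intermediate configuration is the one changing site x first\<close>
  define \<tau>0 where "\<tau>0 = \<sigma>(x := \<rho> x)"
  have \<tau>0: "\<tau>0 \<in> configs n b" unfolding \<tau>0_def using configs_upd configs_le assms by blast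
  have "\<tau> = \<tau>0" if "agree_outside {x} \<sigma> \<tau>" "agree_outside {x + 1} \<tau> \<rho>" for \<tau>
  proof -
    have "\<tau> x = \<rho> x" using that(2) unfolding agree_outside_def by simp
    then show ?thesis using agree_outside_upd[OF that(1)] unfolding \<tau>0_def by simp
  qed
  then have zero: "site_kernel M x \<sigma> \<tau> * site_kernel M' (x + 1) \<tau> \<rho> = 0" if "\<tau> \<noteq> \<tau>0" for \<tau>
    using that unfolding site_kernel_def by auto
  have "(\<Sum>\<tau>\<in>configs n b - {\<tau>0}. site_kernel M x \<sigma> \<tau> * site_kernel M' (x + 1) \<tau> \<rho>) = 0"
    by (rule sum.neutral) (use zero in blast)
  then have "(\<Sum>\<tau>\<in>configs n b. site_kernel M x \<sigma> \<tau> * site_kernel M' (x + 1) \<tau> \<rho>)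
      = site_kernel M x \<sigma> \<tau>0 * site_kernel M' (x + 1) \<tau>0 \<rho>"
    by (simp add: sum.remove[OF finite_configs \<tau>0])
  also have "\<dots> = bond_kernel M M' x \<sigma> \<rho>"
    unfolding site_kernel_def bond_kernel_def \<tau>0_def agree_outside_def by auto
  finally show ?thesis .
qed

lemma site_op_site_op_eq_kernel_sum:
  assumes \<sigma>: "\<sigma> \<in> configs n b" and x: "x \<in> {1..b}" "x + 1 \<in> {1..b}"
  shows "site_op n M x (site_op n M' (x + 1) v) \<sigma> = (\<Sum>\<rho>\<in>configs n b. bond_kernel M M' x \<sigma> \<rho> * v \<rho>)"
proof -
  have "site_op n M x (site_op n M' (x + 1) v) \<sigma>
      = (\<Sum>\<tau>\<in>configs n b. site_kernel M x \<sigma> \<tau> * (\<Sum>\<rho>\<in>configs n b. site_kernel M' (x + 1) \<tau> \<rho> * v \<rho>))"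
    using site_op_eq_kernel_sum[OF \<sigma> x(1)] site_op_eq_kernel_sum[OF _ x(2)] by simp
  also have "\<dots> = (\<Sum>\<rho>\<in>configs n b. (\<Sum>\<tau>\<in>configs n b. site_kernel M x \<sigma> \<tau> * site_kernel M' (x + 1) \<tau> \<rho>) * v \<rho>)"
    unfolding sum_distrib_left sum_distrib_right mult.assoc by (rule sum.swap)
  also have "\<dots> = (\<Sum>\<rho>\<in>configs n b. bond_kernel M M' x \<sigma> \<rho> * v \<rho>)"
    using site_kernel_compose[OF \<sigma> _ x(1)] by simp
  finally show ?thesis .
qed

definition hermitian_matrix :: "(nat \<Rightarrow> nat \<Rightarrow> complex) \<Rightarrow> bool" where
  "hermitian_matrix M \<longleftrightarrow> (\<forall>a c. M c a = cnj (M a c))"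

lemma site_kernel_hermitian:
  assumes "hermitian_matrix M"
  shows "site_kernel M x \<tau> \<sigma> = cnj (site_kernel M x \<sigma> \<tau>)"
proof -
  have "M (\<tau> x) (\<sigma> x) = cnj (M (\<sigma> x) (\<tau> x))"
    using assms unfolding hermitian_matrix_def by blast
  then show ?thesis unfolding site_kernel_def by (simp add: agree_outside_sym)
qed

lemma bond_kernel_hermitian:
  assumes "hermitian_matrix M" "hermitian_matrix M'"
  shows "bond_kernel M M' x \<tau> \<sigma> = cnj (bond_kernel M M' x \<sigma> \<tau>)"
proof -
  have "M (\<tau> x) (\<sigma> x) = cnj (M (\<sigma> x) (\<tau> x))"
    "M' (\<tau> (x + 1)) (\<sigma> (x + 1)) = cnj (M' (\<sigma> (x + 1)) (\<tau> (x + 1)))"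
    using assms unfolding hermitian_matrix_def by blast+
  then show ?thesis unfolding bond_kernel_def by (simp add: agree_outside_sym)
qed

lemma weighted_deviation_agree_outside:
  assumes "X \<subseteq> {1..b}" "agree_outside X \<sigma> \<tau>"
  shows "(\<Sum>x\<in>{1..b}. (n - \<sigma> x) * w x) + (\<Sum>x\<in>X. (n - \<tau> x) * w x)
    = (\<Sum>x\<in>{1..b}. (n - \<tau> x) * w x) + (\<Sum>x\<in>X. (n - \<sigma> x) * w x)"
proof -
  have "(\<Sum>x\<in>{1..b} - X. (n - \<sigma> x) * w x) = (\<Sum>x\<in>{1..b} - X. (n - \<tau> x) * w x)"
    using assms(2) unfolding agree_outside_def by (intro sum.cong) auto
  moreover have "(\<Sum>x\<in>{1..b}. (n - \<rho> x) * w x) = (\<Sum>x\<in>{1..b} - X. (n - \<rho> x) * w x) + (\<Sum>x\<in>X. (n - \<rho> x) * w x)"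
    for \<rho> using assms(1) by (intro sum.subset_diff) auto
  ultimately show ?thesis by simp
qed

section \<open>Spin matrices and the kernel of the Hamiltonian\<close>

definition ladder :: "nat \<Rightarrow> nat \<Rightarrow> real" where
  "ladder n k = sqrt ((real n - real k) * (real k + 1))"

lemma ladder_pos: "k < n \<Longrightarrow> 0 < ladder n k"
  unfolding ladder_def by simp

lemma ladder_nonneg: "k \<le> n \<Longrightarrow> 0 \<le> ladder n k"
  unfolding ladder_def by simp

lemma Spm_eq: "Spm n k' k = (if k' = Suc k then complex_of_real (ladder n k) else 0)"
proof -
  have "spin_j n * (spin_j n + 1) - mval n k * (mval n k + 1) = (real n - real k) * (real k + 1)"
    unfolding spin_j_def mval_def by (simp add: field_simps power2_eq_square)
  then show ?thesis unfolding Spm_def ladder_def by simp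
qed

lemma Smm_eq: "Smm n k' k = (if k = Suc k' then complex_of_real (ladder n k') else 0)"
proof (cases "k = Suc k'")
  case True
  have "spin_j n * (spin_j n + 1) - mval n k * (mval n k - 1) = (real n - real k') * (real k' + 1)"
    unfolding spin_j_def mval_def True by (simp add: field_simps power2_eq_square)
  then show ?thesis unfolding Smm_def ladder_def using True by simp
qed (simp add: Smm_def)

lemma Spm_transpose: "Spm n c a = Smm n a c"
  by (simp add: Spm_eq Smm_eq)

lemma hermitian_S1m: "hermitian_matrix (S1m n)"
  unfolding hermitian_matrix_def S1m_def by (simp add: Spm_transpose) (simp add: Spm_eq Smm_eq)

lemma hermitian_S2m: "hermitian_matrix (S2m n)"
  unfolding hermitian_matrix_def S2m_def by (simp add: Spm_transpose) (simp add: Spm_eq Smm_eq field_simps)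

lemma hermitian_S3m: "hermitian_matrix (S3m n)"
  unfolding hermitian_matrix_def S3m_def by simp

lemma bond_kernel_Spm_Smm:
  "bond_kernel (Spm n) (Smm n) x \<sigma> \<tau> =
    (if agree_outside {x, x + 1} \<sigma> \<tau> \<and> \<sigma> x = Suc (\<tau> x) \<and> \<tau> (x + 1) = Suc (\<sigma> (x + 1))
     then complex_of_real (ladder n (\<tau> x) * ladder n (\<sigma> (x + 1))) else 0)"
  by (simp add: bond_kernel_def Spm_eq Smm_eq)

lemma site_kernel_Spm:
  "site_kernel (Spm n) x \<sigma> \<tau> =
    (if agree_outside {x} \<sigma> \<tau> \<and> \<sigma> x = Suc (\<tau> x) then complex_of_real (ladder n (\<tau> x)) else 0)"
  by (simp add: site_kernel_def Spm_eq)

lemma bond_kernel_Smm_Spm: "bond_kernel (Smm n) (Spm n) x \<sigma> \<tau> = bond_kernel (Spm n) (Smm n) x \<tau> \<sigma>"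
  unfolding bond_kernel_def by (simp add: Spm_transpose agree_outside_sym mult.commute)

lemma site_kernel_Smm: "site_kernel (Smm n) x \<sigma> \<tau> = site_kernel (Spm n) x \<tau> \<sigma>"
  unfolding site_kernel_def by (simp add: Spm_transpose agree_outside_sym)

lemma cnj_site_kernel_Spm: "cnj (site_kernel (Spm n) x \<sigma> \<tau>) = site_kernel (Spm n) x \<sigma> \<tau>"
  by (simp add: site_kernel_Spm)

definition xxz_bond_kernel :: "nat \<Rightarrow> real \<Rightarrow> nat \<Rightarrow> cfg \<Rightarrow> cfg \<Rightarrow> complex" where
  "xxz_bond_kernel n \<Delta> x \<sigma> \<tau> =
     complex_of_real (1 / \<Delta>) * (bond_kernel (S1m n) (S1m n) x \<sigma> \<tau> + bond_kernel (S2m n) (S2m n) x \<sigma> \<tau>)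
     + bond_kernel (S3m n) (S3m n) x \<sigma> \<tau> - complex_of_real ((spin_j n)\<^sup>2) * of_bool (\<sigma> = \<tau>)"

definition Hpm_kernel :: "nat \<Rightarrow> real \<Rightarrow> nat \<Rightarrow> nat \<Rightarrow> real \<Rightarrow> real \<Rightarrow> real \<Rightarrow> cfg \<Rightarrow> cfg \<Rightarrow> complex" where
  "Hpm_kernel n \<Delta> b y B1 B2 B3 \<sigma> \<tau> = - (\<Sum>x\<in>{1..<b}. xxz_bond_kernel n \<Delta> x \<sigma> \<tau>)
     - complex_of_real (spin_j n * Aconst \<Delta>) * (site_kernel (S3m n) 1 \<sigma> \<tau> - site_kernel (S3m n) b \<sigma> \<tau>)
     + complex_of_real B1 * site_kernel (S1m n) y \<sigma> \<tau> + complex_of_real B2 * site_kernel (S2m n) y \<sigma> \<tau>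
     + complex_of_real B3 * site_kernel (S3m n) y \<sigma> \<tau>"

lemma Hpm_eq_kernel_sum:
  assumes \<sigma>: "\<sigma> \<in> configs n b" and "1 \<le> y" "y \<le> b"
  shows "Hpm n \<Delta> b y B1 B2 B3 v \<sigma> = (\<Sum>\<tau>\<in>configs n b. Hpm_kernel n \<Delta> b y B1 B2 B3 \<sigma> \<tau> * v \<tau>)"
proof -
  let ?C = "configs n b" and ?J = "complex_of_real (spin_j n * Aconst \<Delta>)"
  have sites: "1 \<in> {1..b}" "b \<in> {1..b}" "y \<in> {1..b}" using assms by auto
  have bonds: "(\<Sum>x\<in>{1..<b}. complex_of_real (1 / \<Delta>) * (S1 n x (S1 n (x + 1) v) \<sigma> + S2 n x (S2 n (x + 1) v) \<sigma>)
          + S3 n x (S3 n (x + 1) v) \<sigma> - complex_of_real ((spin_j n)\<^sup>2) * v \<sigma>)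
        = (\<Sum>x\<in>{1..<b}. \<Sum>\<tau>\<in>?C. xxz_bond_kernel n \<Delta> x \<sigma> \<tau> * v \<tau>)"
  proof (rule sum.cong[OF refl])
    fix x assume "x \<in> {1..<b}"
    then have x: "x \<in> {1..b}" "x + 1 \<in> {1..b}" by auto
    have delta: "(\<Sum>\<tau>\<in>?C. of_bool (\<sigma> = \<tau>) * v \<tau>) = v \<sigma>"
      using \<sigma> by (simp add: finite_configs)
    show "complex_of_real (1 / \<Delta>) * (S1 n x (S1 n (x + 1) v) \<sigma> + S2 n x (S2 n (x + 1) v) \<sigma>)
          + S3 n x (S3 n (x + 1) v) \<sigma> - complex_of_real ((spin_j n)\<^sup>2) * v \<sigma>
        = (\<Sum>\<tau>\<in>?C. xxz_bond_kernel n \<Delta> x \<sigma> \<tau> * v \<tau>)"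
      unfolding xxz_bond_kernel_def site_op_site_op_eq_kernel_sum[OF \<sigma> x] delta[symmetric]
      by (simp add: sum.distrib sum_subtractf sum_distrib_left ring_distribs mult.assoc)
  qed
  have "Hpm n \<Delta> b y B1 B2 B3 v \<sigma> = - (\<Sum>x\<in>{1..<b}. \<Sum>\<tau>\<in>?C. xxz_bond_kernel n \<Delta> x \<sigma> \<tau> * v \<tau>)
     - ?J * ((\<Sum>\<tau>\<in>?C. site_kernel (S3m n) 1 \<sigma> \<tau> * v \<tau>) - (\<Sum>\<tau>\<in>?C. site_kernel (S3m n) b \<sigma> \<tau> * v \<tau>))
     + complex_of_real B1 * (\<Sum>\<tau>\<in>?C. site_kernel (S1m n) y \<sigma> \<tau> * v \<tau>)
     + complex_of_real B2 * (\<Sum>\<tau>\<in>?C. site_kernel (S2m n) y \<sigma> \<tau> * v \<tau>)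
     + complex_of_real B3 * (\<Sum>\<tau>\<in>?C. site_kernel (S3m n) y \<sigma> \<tau> * v \<tau>)"
    unfolding Hpm_def bonds site_op_eq_kernel_sum[OF \<sigma> sites(1)]
      site_op_eq_kernel_sum[OF \<sigma> sites(2)] site_op_eq_kernel_sum[OF \<sigma> sites(3)] by (rule refl)
  also have "(\<Sum>x\<in>{1..<b}. \<Sum>\<tau>\<in>?C. xxz_bond_kernel n \<Delta> x \<sigma> \<tau> * v \<tau>)
      = (\<Sum>\<tau>\<in>?C. (\<Sum>x\<in>{1..<b}. xxz_bond_kernel n \<Delta> x \<sigma> \<tau>) * v \<tau>)"
    unfolding sum_distrib_right by (rule sum.swap)
  finally show ?thesis
    unfolding Hpm_kernel_def
    by (simp add: algebra_simps sum.distrib sum_subtractf sum_negf sum_distrib_left)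
qed

lemma Hpm_kernel_hermitian:
  "Hpm_kernel n \<Delta> b y B1 B2 B3 \<tau> \<sigma> = cnj (Hpm_kernel n \<Delta> b y B1 B2 B3 \<sigma> \<tau>)"
  by (simp add: Hpm_kernel_def xxz_bond_kernel_def eq_commute[of \<tau>]
      bond_kernel_hermitian[of "S1m n" "S1m n" _ \<tau> \<sigma>] bond_kernel_hermitian[of "S2m n" "S2m n" _ \<tau> \<sigma>]
      bond_kernel_hermitian[of "S3m n" "S3m n" _ \<tau> \<sigma>] site_kernel_hermitian[of "S1m n" _ \<tau> \<sigma>]
      site_kernel_hermitian[of "S2m n" _ \<tau> \<sigma>] site_kernel_hermitian[of "S3m n" _ \<tau> \<sigma>]
      hermitian_S1m hermitian_S2m hermitian_S3m)

lemma S1m_S2m_product: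
  "S1m n a c * S1m n a' c' + S2m n a c * S2m n a' c' = (Spm n a c * Smm n a' c' + Smm n a c * Spm n a' c') / 2"
  unfolding S1m_def S2m_def by (simp add: field_simps)

lemma transverse_field_ladder:
  "complex_of_real B1 * ((P + M) / 2) + complex_of_real B2 * ((P - M) / (2 * \<i>))
     = (Complex B1 (- B2) * P + Complex B1 B2 * M) / 2"
  unfolding Complex_eq by (simp add: field_simps)

lemma S1m_S2m_field:
  "complex_of_real B1 * S1m n a c + complex_of_real B2 * S2m n a c
     = (Complex B1 (- B2) * Spm n a c + Complex B1 B2 * Smm n a c) / 2"
  unfolding S1m_def S2m_def by (rule transverse_field_ladder)

lemma Hpm_kernel_off_diag:
  assumes "\<sigma> \<noteq> \<tau>"
  shows "Hpm_kernel n \<Delta> b y B1 B2 B3 \<sigma> \<tau>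
    = - complex_of_real (1 / (2 * \<Delta>))
        * (\<Sum>x\<in>{1..<b}. bond_kernel (Spm n) (Smm n) x \<sigma> \<tau> + bond_kernel (Smm n) (Spm n) x \<sigma> \<tau>)
      + (Complex B1 (- B2) * site_kernel (Spm n) y \<sigma> \<tau> + Complex B1 B2 * site_kernel (Smm n) y \<sigma> \<tau>) / 2"
proof -
  have diag: "site_kernel (S3m n) x \<sigma> \<tau> = 0" "bond_kernel (S3m n) (S3m n) x \<sigma> \<tau> = 0" for x
    using assms unfolding site_kernel_def bond_kernel_def S3m_def agree_outside_def
    by (auto simp: fun_eq_iff)
  have "xxz_bond_kernel n \<Delta> x \<sigma> \<tau>
      = complex_of_real (1 / (2 * \<Delta>)) * (bond_kernel (Spm n) (Smm n) x \<sigma> \<tau> + bond_kernel (Smm n) (Spm n) x \<sigma> \<tau>)" for x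
    unfolding xxz_bond_kernel_def diag using assms
    by (simp add: bond_kernel_def S1m_S2m_product field_simps)
  then have bonds: "(\<Sum>x\<in>{1..<b}. xxz_bond_kernel n \<Delta> x \<sigma> \<tau>)
      = complex_of_real (1 / (2 * \<Delta>)) * (\<Sum>x\<in>{1..<b}. bond_kernel (Spm n) (Smm n) x \<sigma> \<tau> + bond_kernel (Smm n) (Spm n) x \<sigma> \<tau>)"
    by (simp add: sum_distrib_left)
  have field: "complex_of_real B1 * site_kernel (S1m n) y \<sigma> \<tau> + complex_of_real B2 * site_kernel (S2m n) y \<sigma> \<tau>
      = (Complex B1 (- B2) * site_kernel (Spm n) y \<sigma> \<tau> + Complex B1 B2 * site_kernel (Smm n) y \<sigma> \<tau>) / 2"
    by (cases "agree_outside {y} \<sigma> \<tau>") (simp_all add: site_kernel_def S1m_S2m_field)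
  have "Hpm_kernel n \<Delta> b y B1 B2 B3 \<sigma> \<tau> = - (\<Sum>x\<in>{1..<b}. xxz_bond_kernel n \<Delta> x \<sigma> \<tau>)
      + (complex_of_real B1 * site_kernel (S1m n) y \<sigma> \<tau> + complex_of_real B2 * site_kernel (S2m n) y \<sigma> \<tau>)"
    unfolding Hpm_kernel_def diag by simp
  then show ?thesis unfolding bonds field by simp
qed

section \<open>Spin coherent vectors\<close>

lemma binomial_ladder: "(real n - real k) * real (n choose k) = (real k + 1) * real (n choose Suc k)"
proof (cases "k \<le> n")
  case True
  have "(n - k) * (n choose k) = Suc k * (n choose Suc k)"
    by (simp only: binomial_absorption binomial_absorb_comp)
  then have "real ((n - k) * (n choose k)) = real (Suc k * (n choose Suc k))" by (simp only:)
  with True show ?thesis by (simp add: algebra_simps)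
qed (simp add: binomial_eq_0)

lemma ladder_wcoef_lower: "ladder n k * wcoef n (Suc k) = (real n - real k) * wcoef n k"
proof (cases "k \<le> n")
  case True
  have "ladder n k * wcoef n (Suc k) = sqrt ((real n - real k) * ((real k + 1) * real (n choose Suc k)))"
    unfolding ladder_def wcoef_def by (simp add: real_sqrt_mult mult.assoc)
  also have "\<dots> = sqrt ((real n - real k)\<^sup>2 * real (n choose k))"
    by (simp add: binomial_ladder[symmetric] power2_eq_square mult.assoc)
  also have "\<dots> = (real n - real k) * wcoef n k"
    unfolding wcoef_def using True by (simp add: real_sqrt_mult)
  finally show ?thesis .
qed (simp add: wcoef_def binomial_eq_0)

lemma ladder_wcoef_raise: "ladder n k * wcoef n k = (real k + 1) * wcoef n (Suc k)"
proof (cases "k < n")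
  case True
  have "ladder n k * wcoef n k = sqrt ((real k + 1) * ((real n - real k) * real (n choose k)))"
    unfolding ladder_def wcoef_def by (simp add: real_sqrt_mult mult_ac)
  also have "\<dots> = sqrt ((real k + 1)\<^sup>2 * real (n choose Suc k))"
    by (simp add: binomial_ladder power2_eq_square mult.assoc)
  also have "\<dots> = (real k + 1) * wcoef n (Suc k)"
    unfolding wcoef_def by (simp add: real_sqrt_mult)
  finally show ?thesis .
next
  case False
  then have "ladder n k = 0 \<or> n < k" unfolding ladder_def by (cases "k = n") auto
  with False show ?thesis unfolding wcoef_def by (auto simp: binomial_eq_0)
qed

definition coherent :: "nat \<Rightarrow> complex \<Rightarrow> nat \<Rightarrow> complex" where
  "coherent n u k = u ^ (n - k) * complex_of_real (wcoef n k)"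

lemma chi_eq_coherent:
  "chi n q x z k = complex_of_real ((1 + (cmod z)\<^sup>2 * (1 / q) ^ (2 * x)) powr (- spin_j n))
     * coherent n (z * complex_of_real ((1 / q) ^ x)) k"
  unfolding chi_def coherent_def by (simp add: mult.assoc)

lemma Spm_coherent:
  assumes "a \<le> n"
  shows "(\<Sum>k\<in>{0..n}. Spm n a k * coherent n u k) = of_nat a * u * coherent n u a"
proof (cases a)
  case (Suc a')
  have "(\<Sum>k\<in>{0..n}. Spm n a k * coherent n u k) = of_real (ladder n a') * coherent n u a'"
    using assms Suc by (simp add: Spm_eq if_distrib[of "\<lambda>c. c * _"] cong: if_cong)
  also have "\<dots> = of_nat a * u * coherent n u a"
  proof -
    have lw: "complex_of_real (ladder n a') * complex_of_real (wcoef n a') = of_nat a * complex_of_real (wcoef n a)"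
      using arg_cong[OF ladder_wcoef_raise[of n a'], of complex_of_real] Suc by simp
    have "n - a' = Suc (n - a)" using assms Suc by simp
    then have "of_real (ladder n a') * coherent n u a' = u ^ (n - a) * u * (of_real (ladder n a') * of_real (wcoef n a'))"
      unfolding coherent_def by (simp add: algebra_simps)
    also have "\<dots> = of_nat a * u * coherent n u a"
      unfolding lw coherent_def by (simp add: algebra_simps)
    finally show ?thesis .
  qed
  finally show ?thesis .
qed (simp add: Spm_eq)

lemma Smm_coherent:
  assumes "a \<le> n" "u \<noteq> 0"
  shows "(\<Sum>k\<in>{0..n}. Smm n a k * coherent n u k) = of_nat (n - a) / u * coherent n u a"
proof (cases "a = n")
  case False
  then have "a < n" using assms by simp
  have "(\<Sum>k\<in>{0..n}. Smm n a k * coherent n u k) = of_real (ladder n a) * coherent n u (Suc a)"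
    using \<open>a < n\<close> by (simp add: Smm_eq if_distrib[of "\<lambda>c. c * _"] cong: if_cong)
  also have "\<dots> = of_nat (n - a) / u * coherent n u a"
  proof -
    have lw: "complex_of_real (ladder n a) * complex_of_real (wcoef n (Suc a)) = of_nat (n - a) * complex_of_real (wcoef n a)"
      using arg_cong[OF ladder_wcoef_lower[of n a], of complex_of_real] \<open>a < n\<close> by simp
    have "n - a = Suc (n - Suc a)" using \<open>a < n\<close> by simp
    then have "of_nat (n - a) / u * coherent n u a = u ^ (n - Suc a) * (of_nat (n - a) * of_real (wcoef n a))"
      unfolding coherent_def using assms(2) by (simp add: field_simps)
    also have "\<dots> = of_real (ladder n a) * coherent n u (Suc a)"
      unfolding lw[symmetric] coherent_def by (simp add: algebra_simps)
    finally show ?thesis ..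
  qed
  finally show ?thesis .
qed (simp add: Smm_eq)

lemma S3m_diag_sum:
  "a \<le> n \<Longrightarrow> (\<Sum>k\<in>{0..n}. S3m n a k * f k) = complex_of_real (mval n a) * f a"
  by (simp add: S3m_def if_distrib[of "\<lambda>c. c * _"] cong: if_cong)

definition coherent_S1 :: "nat \<Rightarrow> complex \<Rightarrow> nat \<Rightarrow> complex" where
  "coherent_S1 n u a = (of_nat a * u + of_nat (n - a) / u) / 2"

definition coherent_S2 :: "nat \<Rightarrow> complex \<Rightarrow> nat \<Rightarrow> complex" where
  "coherent_S2 n u a = (of_nat a * u - of_nat (n - a) / u) / (2 * \<i>)"

lemma S1m_coherent:
  assumes "a \<le> n" "u \<noteq> 0"
  shows "(\<Sum>k\<in>{0..n}. S1m n a k * coherent n u k) = coherent_S1 n u a * coherent n u a"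
proof -
  have "(\<Sum>k\<in>{0..n}. S1m n a k * coherent n u k)
      = ((\<Sum>k\<in>{0..n}. Spm n a k * coherent n u k) + (\<Sum>k\<in>{0..n}. Smm n a k * coherent n u k)) / 2"
    unfolding S1m_def by (simp add: sum.distrib sum_divide_distrib[symmetric] algebra_simps)
  then show ?thesis
    unfolding Spm_coherent[OF assms(1)] Smm_coherent[OF assms] coherent_S1_def by (simp add: algebra_simps)
qed

lemma S2m_coherent:
  assumes "a \<le> n" "u \<noteq> 0"
  shows "(\<Sum>k\<in>{0..n}. S2m n a k * coherent n u k) = coherent_S2 n u a * coherent n u a"
proof -
  have "(\<Sum>k\<in>{0..n}. S2m n a k * coherent n u k)
      = ((\<Sum>k\<in>{0..n}. Spm n a k * coherent n u k) - (\<Sum>k\<in>{0..n}. Smm n a k * coherent n u k)) / (2 * \<i>)"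
    unfolding S2m_def by (simp add: sum_subtractf sum_divide_distrib[symmetric] algebra_simps)
  then show ?thesis
    unfolding Spm_coherent[OF assms(1)] Smm_coherent[OF assms] coherent_S2_def by (simp add: algebra_simps)
qed

lemma coherent_XY_coupling:
  assumes "u \<noteq> 0" "u' \<noteq> 0" "a \<le> n" "a' \<le> n"
  shows "coherent_S1 n u a * coherent_S1 n u' a' + coherent_S2 n u a * coherent_S2 n u' a'
    = (of_nat a * of_nat (n - a') * (u / u') + of_nat (n - a) * of_nat a' * (u' / u)) / 2"
  unfolding coherent_S1_def coherent_S2_def using assms by (simp add: field_simps)

lemma kink_coupling_identity:
  fixes q a a' j :: real
  assumes q: "0 < q"
  shows "2 / (q + 1 / q) * ((a * (2 * j - a') * q + (2 * j - a) * a' / q) / 2) + ((a - j) * (a' - j) - j\<^sup>2)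
    = - (j * ((1 / q - q) / (q + 1 / q)) * ((a - j) - (a' - j)))"
proof -
  define X where "X = 1 / q"
  define s where "s = q + X"
  have "0 < q + 1 / q" by (intro add_pos_pos) (use q in auto)
  then have s: "s \<noteq> 0" unfolding s_def X_def by simp
  define A where "A = a * (2 * j - a') * q + (2 * j - a) * a' * X"
  define M where "M = (a - j) * (a' - j) - j\<^sup>2"
  have poly: "A + s * M = - (j * (X - q)) * ((a - j) - (a' - j))"
    unfolding A_def M_def s_def by (simp add: algebra_simps power2_eq_square)
  have "2 / (q + 1 / q) * ((a * (2 * j - a') * q + (2 * j - a) * a' / q) / 2) + M = 2 / s * (A / 2) + M"
    unfolding A_def s_def X_def by simp
  also have "\<dots> = A / s + M" by simp
  also have "\<dots> = (A + s * M) / s" using s by (simp add: field_simps)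
  also have "\<dots> = (- (j * (X - q)) * ((a - j) - (a' - j))) / s" by (simp only: poly)
  also have "\<dots> = - (j * ((1 / q - q) / (q + 1 / q))) * ((a - j) - (a' - j))"
    unfolding s_def X_def by simp
  finally show ?thesis unfolding M_def by simp
qed

lemma coherent_bond_identity:
  fixes q :: real
  assumes u: "u \<noteq> 0" and q: "0 < q" and a: "a \<le> n" "a' \<le> n"
  shows "complex_of_real (2 / (q + 1 / q)) * (coherent_S1 n u a * coherent_S1 n (u / of_real q) a'
        + coherent_S2 n u a * coherent_S2 n (u / of_real q) a')
      + complex_of_real (mval n a * mval n a' - (spin_j n)\<^sup>2)
    = - complex_of_real (spin_j n * ((1 / q - q) / (q + 1 / q)) * (mval n a - mval n a'))"
proof -
  define Y where "Y = real a * (real n - real a') * q + (real n - real a) * real a' / q"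
  have "u / (u / of_real q) = of_real q" "u / of_real q / u = of_real (1 / q)"
    using u q by simp_all
  then have "coherent_S1 n u a * coherent_S1 n (u / of_real q) a' + coherent_S2 n u a * coherent_S2 n (u / of_real q) a'
      = (of_nat a * of_nat (n - a') * of_real q + of_nat (n - a) * of_nat a' * of_real (1 / q)) / 2"
    using coherent_XY_coupling[of u "u / of_real q" a n a'] u q a by simp
  also have "\<dots> = complex_of_real (Y / 2)"
    unfolding Y_def using a by simp
  finally have XY: "coherent_S1 n u a * coherent_S1 n (u / of_real q) a' + coherent_S2 n u a * coherent_S2 n (u / of_real q) a'
      = complex_of_real (Y / 2)" .
  have "2 / (q + 1 / q) * (Y / 2) + (mval n a * mval n a' - (spin_j n)\<^sup>2)
      = - (spin_j n * ((1 / q - q) / (q + 1 / q)) * (mval n a - mval n a'))"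
    using kink_coupling_identity[OF q, of "real a" "spin_j n" "real a'"]
    unfolding Y_def mval_def spin_j_def by simp
  then show ?thesis unfolding XY
    by (metis of_real_add of_real_mult of_real_minus)
qed

lemma normB_plus_B3_pos: "B1\<^sup>2 + B2\<^sup>2 > 0 \<Longrightarrow> normB B1 B2 B3 + B3 > 0"
proof -
  assume "B1\<^sup>2 + B2\<^sup>2 > 0"
  then have "sqrt (B3\<^sup>2) < normB B1 B2 B3"
    unfolding normB_def by (intro real_sqrt_less_mono) simp
  then show ?thesis by simp
qed

lemma coherent_field_identity:
  fixes B1 B2 B3 :: real
  assumes B: "B1\<^sup>2 + B2\<^sup>2 > 0" and a: "a \<le> n"
  defines "u \<equiv> - complex_of_real (normB B1 B2 B3 + B3) / Complex B1 (- B2)"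
  shows "complex_of_real B1 * coherent_S1 n u a + complex_of_real B2 * coherent_S2 n u a
      + complex_of_real (B3 * mval n a) = - complex_of_real (spin_j n * normB B1 B2 B3)"
proof -
  define N where "N = normB B1 B2 B3"
  define \<beta> where "\<beta> = Complex B1 (- B2)"
  have N: "N + B3 > 0" unfolding N_def using normB_plus_B3_pos[OF B] .
  have \<beta>: "\<beta> \<noteq> 0" unfolding \<beta>_def using B by (auto simp: complex_eq_iff)
  have cnj_\<beta>: "Complex B1 B2 = cnj \<beta>" unfolding \<beta>_def by (simp add: complex_eq_iff)
  have \<beta>u: "\<beta> * u = - of_real (N + B3)"
    unfolding u_def N_def \<beta>_def[symmetric] using \<beta> by simp
  then have "u \<noteq> 0" using N by auto
  have "cnj \<beta> * \<beta> = of_real ((N - B3) * (N + B3))"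
    unfolding \<beta>_def N_def normB_def by (simp add: complex_eq_iff power2_eq_square algebra_simps)
  moreover have "cnj \<beta> / u = (cnj \<beta> * \<beta>) / (\<beta> * u)"
    using \<beta> by simp
  ultimately have "cnj \<beta> / u = - of_real (((N - B3) * (N + B3)) / (N + B3))"
    unfolding \<beta>u by (simp only: of_real_divide divide_minus_right)
  also have "((N - B3) * (N + B3)) / (N + B3) = N - B3"
    using N by simp
  finally have cnj\<beta>u: "cnj \<beta> / u = - of_real (N - B3)" .
  have "complex_of_real B1 * coherent_S1 n u a + complex_of_real B2 * coherent_S2 n u a
      = (of_nat a * (\<beta> * u) + of_nat (n - a) * (cnj \<beta> / u)) / 2"
    unfolding coherent_S1_def coherent_S2_def transverse_field_ladder \<beta>_def[symmetric] cnj_\<beta>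
    by (simp add: algebra_simps)
  also have "\<dots> = of_real (- (real a * (N + B3) + (real n - real a) * (N - B3)) / 2)"
    unfolding \<beta>u cnj\<beta>u using a by (simp add: algebra_simps)
  moreover have "- (real a * (N + B3) + (real n - real a) * (N - B3)) / 2 + B3 * mval n a = - (spin_j n * N)"
    unfolding mval_def spin_j_def by (simp add: field_simps)
  ultimately show ?thesis
    unfolding N_def[symmetric] by (metis of_real_add of_real_minus)
qed

definition prodvec :: "nat \<Rightarrow> nat \<Rightarrow> (nat \<Rightarrow> nat \<Rightarrow> complex) \<Rightarrow> vec" where
  "prodvec n b F = (\<lambda>\<sigma>. if \<sigma> \<in> configs n b then (\<Prod>x\<in>{1..b}. F x (\<sigma> x)) else 0)"

lemma prodvec_site_scale:
  assumes "\<sigma> \<in> configs n b" "x \<in> {1..b}"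
  shows "prodvec n b (F(x := \<lambda>a. \<mu> a * F x a)) \<sigma> = \<mu> (\<sigma> x) * prodvec n b F \<sigma>"
proof -
  have "(\<Prod>x'\<in>{1..b} - {x}. (F(x := \<lambda>a. \<mu> a * F x a)) x' (\<sigma> x')) = (\<Prod>x'\<in>{1..b} - {x}. F x' (\<sigma> x'))"
    by (rule prod.cong) auto
  then show ?thesis
    using assms(1) unfolding prodvec_def prod.remove[OF finite_atLeastAtMost assms(2)] by (simp add: mult.assoc)
qed

lemma site_op_prodvec:
  assumes \<sigma>: "\<sigma> \<in> configs n b" and x: "x \<in> {1..b}"
    and eigen: "\<And>a. a \<le> n \<Longrightarrow> (\<Sum>k\<in>{0..n}. M a k * F x k) = \<mu> a * F x a"
  shows "site_op n M x (prodvec n b F) \<sigma> = \<mu> (\<sigma> x) * prodvec n b F \<sigma>"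
proof -
  let ?R = "\<Prod>x'\<in>{1..b} - {x}. F x' (\<sigma> x')"
  have "prodvec n b F (\<sigma>(x := k)) = F x k * ?R" if "k \<in> {0..n}" for k
  proof -
    have "\<sigma>(x := k) \<in> configs n b" using configs_upd \<sigma> x that by auto
    moreover have "(\<Prod>x'\<in>{1..b} - {x}. F x' ((\<sigma>(x := k)) x')) = ?R"
      by (rule prod.cong) auto
    ultimately show ?thesis
      unfolding prodvec_def prod.remove[OF finite_atLeastAtMost x] by simp
  qed
  then have "site_op n M x (prodvec n b F) \<sigma> = (\<Sum>k\<in>{0..n}. M (\<sigma> x) k * F x k) * ?R"
    unfolding site_op_def by (simp add: sum_distrib_right mult.assoc)
  also have "\<dots> = \<mu> (\<sigma> x) * prodvec n b F \<sigma>"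
    using eigen[OF configs_le[OF \<sigma> x]] \<sigma> unfolding prodvec_def prod.remove[OF finite_atLeastAtMost x]
    by (simp add: mult.assoc)
  finally show ?thesis .
qed

lemma site_op_site_op_prodvec:
  assumes \<sigma>: "\<sigma> \<in> configs n b" and x: "x \<in> {1..b}" "x' \<in> {1..b}" "x \<noteq> x'"
    and eigen: "\<And>a. a \<le> n \<Longrightarrow> (\<Sum>k\<in>{0..n}. M a k * F x k) = \<mu> a * F x a"
    and eigen': "\<And>a. a \<le> n \<Longrightarrow> (\<Sum>k\<in>{0..n}. M' a k * F x' k) = \<mu>' a * F x' a"
  shows "site_op n M x (site_op n M' x' (prodvec n b F)) \<sigma> = \<mu> (\<sigma> x) * \<mu>' (\<sigma> x') * prodvec n b F \<sigma>"
proof -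
  define F' where "F' = F(x' := \<lambda>a. \<mu>' a * F x' a)"
  have "site_op n M' x' (prodvec n b F) \<tau> = prodvec n b F' \<tau>" if "\<tau> \<in> configs n b" for \<tau>
    unfolding F'_def prodvec_site_scale[OF that x(2)]
    by (rule site_op_prodvec[OF that x(2), where M = M' and \<mu> = \<mu>' and F = F, OF eigen'])
  then have "site_op n M x (site_op n M' x' (prodvec n b F)) \<sigma> = site_op n M x (prodvec n b F') \<sigma>"
    unfolding site_op_eq_kernel_sum[OF \<sigma> x(1)] by simp
  also have "\<dots> = \<mu> (\<sigma> x) * prodvec n b F' \<sigma>"
    using x(3) by (intro site_op_prodvec[OF \<sigma> x(1)]) (simp add: F'_def eigen)
  finally show ?thesis
    unfolding F'_def prodvec_site_scale[OF \<sigma> x(2)] by simp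
qed

section \<open>The kink chain\<close>

lemma qpar_spec:
  assumes "\<Delta> > 1"
  shows "0 < qpar \<Delta> \<and> qpar \<Delta> < 1 \<and> qpar \<Delta> + 1 / qpar \<Delta> = 2 * \<Delta>"
proof -
  define s where "s = sqrt (\<Delta>\<^sup>2 - 1)"
  define q0 where "q0 = \<Delta> - s"
  have "s < \<Delta>" unfolding s_def using assms by (intro real_less_lsqrt) auto
  moreover have "\<Delta> - 1 < s" unfolding s_def using assms
    by (intro real_less_rsqrt) (simp add: power2_eq_square algebra_simps)
  ultimately have q0: "0 < q0" "q0 < 1" unfolding q0_def by auto
  have "s * s = \<Delta>\<^sup>2 - 1" unfolding s_def using assms
    by (simp add: abs_square_less_1 power2_eq_square[symmetric] abs_if)
  then have "q0 * (\<Delta> + s) = 1" unfolding q0_def by (simp add: algebra_simps power2_eq_square)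
  then have "1 / q0 = \<Delta> + s" using q0 by (simp add: field_simps)
  then have P: "0 < q0 \<and> q0 < 1 \<and> q0 + 1 / q0 = 2 * \<Delta>" using q0 unfolding q0_def by simp
  \<comment> \<open>q + 1/q is injective on (0,1)\<close>
  have "q = q0" if q: "0 < q \<and> q < 1 \<and> q + 1 / q = 2 * \<Delta>" for q
  proof -
    have "(q - q0) * (1 - 1 / (q * q0)) = (q + 1 / q) - (q0 + 1 / q0)"
      using q0(1) conjunct1[OF q]
      by (simp add: field_simps; simp add: algebra_simps)
    also have "\<dots> = 0" using q P by simp
    finally have "q - q0 = 0 \<or> 1 - 1 / (q * q0) = 0" by (simp only: mult_eq_0_iff)
    moreover have "q * q0 < 1 * 1" using q q0 by (intro mult_strict_mono) auto
    then have "1 - 1 / (q * q0) \<noteq> 0" using q q0 by simp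
    ultimately show ?thesis by (simp only: right_minus_eq) blast
  qed
  then have "qpar \<Delta> = q0" unfolding qpar_def using P by (intro the_equality) blast+
  then show ?thesis using P by simp
qed

lemma Aconst_eq:
  assumes q: "0 < q" "q < 1" and \<Delta>: "q + 1 / q = 2 * \<Delta>"
  shows "Aconst \<Delta> = (1 / q - q) / (q + 1 / q)"
proof -
  have s: "0 < q + 1 / q" using q by (intro add_pos_pos) auto
  have "q * q < 1 * 1" using q by (intro mult_strict_mono) auto
  then have "0 < 1 / q - q" using q by (simp add: field_simps)
  then have pos: "0 < (1 / q - q) / (q + 1 / q)" using s by simp
  have gen: "1 - 1 / (c / 2)\<^sup>2 = (d / c)\<^sup>2" if "c > 0" "c\<^sup>2 - d\<^sup>2 = 4" for c d :: real
  proof -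
    have "1 - 1 / (c / 2)\<^sup>2 = (c\<^sup>2 - 4) / c\<^sup>2" using that(1) by (simp add: field_simps power2_eq_square)
    then show ?thesis using that(2) by (simp add: power_divide)
  qed
  have four: "(q + 1 / q)\<^sup>2 - (1 / q - q)\<^sup>2 = 4" using q by (simp add: power2_eq_square field_simps)
  have D: "\<Delta> = (q + 1 / q) / 2" using \<Delta> by simp
  have "1 - 1 / \<Delta>\<^sup>2 = ((1 / q - q) / (q + 1 / q))\<^sup>2"
    unfolding D by (rule gen[OF s four])
  then show ?thesis
    unfolding Aconst_def using pos by (simp only: real_sqrt_abs abs_of_pos)
qed

locale kink_chain =
  fixes n b y :: nat and \<Delta> B1 B2 B3 :: real
  assumes n_pos: "n \<ge> 1" and \<Delta>_gt_1: "\<Delta> > 1" and y_ge_1: "1 \<le> y" and y_le_b: "y \<le> b"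
    and transverse_field: "B1\<^sup>2 + B2\<^sup>2 > 0"
begin

abbreviation "q \<equiv> qpar \<Delta>"
abbreviation "N \<equiv> normB B1 B2 B3"
abbreviation "\<beta> \<equiv> Complex B1 (- B2)"
definition z :: complex where "z = - complex_of_real (N + B3) / \<beta> * complex_of_real (q ^ y)"

abbreviation "\<psi> \<equiv> psi n q b z"
abbreviation "K \<equiv> Hpm_kernel n \<Delta> b y B1 B2 B3"
abbreviation "E \<equiv> - spin_j n * N"

lemma q_pos: "0 < q" and q_less_1: "q < 1" and q_plus_inverse: "q + 1 / q = 2 * \<Delta>"
  using qpar_spec[OF \<Delta>_gt_1] by auto

lemma \<beta>_nonzero: "\<beta> \<noteq> 0"
  using transverse_field by (auto simp: complex_eq_iff)

lemma N_plus_B3_pos: "N + B3 > 0"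
  using normB_plus_B3_pos[OF transverse_field] .

lemma z_nonzero: "z \<noteq> 0"
  unfolding z_def using N_plus_B3_pos \<beta>_nonzero q_pos by simp

definition site_param :: "nat \<Rightarrow> complex" where
  "site_param x = z * complex_of_real ((1 / q) ^ x)"

lemma site_param_nonzero: "site_param x \<noteq> 0"
  unfolding site_param_def using z_nonzero q_pos by simp

lemma site_param_Suc: "site_param (x + 1) = site_param x / complex_of_real q"
  unfolding site_param_def by (simp add: divide_inverse)

lemma site_param_y: "site_param y = - complex_of_real (N + B3) / \<beta>"
proof -
  have "complex_of_real (q ^ y) * complex_of_real ((1 / q) ^ y) = 1"
    using q_pos by (simp flip: of_real_mult add: power_one_over power_mult_distrib[symmetric])
  then show ?thesis unfolding site_param_def z_def by (simp add: mult.assoc)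
qed

lemma chi_site_sum:
  assumes "(\<Sum>k\<in>{0..n}. M a k * coherent n (site_param x) k) = \<mu> * coherent n (site_param x) a"
  shows "(\<Sum>k\<in>{0..n}. M a k * chi n q x z k) = \<mu> * chi n q x z a"
  using assms unfolding chi_eq_coherent site_param_def[symmetric]
  by (simp add: sum_distrib_left[symmetric] mult.left_commute[of _ "complex_of_real _"])

lemma S1m_chi: "a \<le> n \<Longrightarrow> (\<Sum>k\<in>{0..n}. S1m n a k * chi n q x z k) = coherent_S1 n (site_param x) a * chi n q x z a"
  by (intro chi_site_sum S1m_coherent site_param_nonzero)

lemma S2m_chi: "a \<le> n \<Longrightarrow> (\<Sum>k\<in>{0..n}. S2m n a k * chi n q x z k) = coherent_S2 n (site_param x) a * chi n q x z a"
  by (intro chi_site_sum S2m_coherent site_param_nonzero)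

lemma S3m_chi: "a \<le> n \<Longrightarrow> (\<Sum>k\<in>{0..n}. S3m n a k * chi n q x z k) = complex_of_real (mval n a) * chi n q x z a"
  by (rule S3m_diag_sum)

lemma psi_eq_prodvec: "\<psi> = prodvec n b (\<lambda>x. chi n q x z)"
  unfolding psi_def prodvec_def ..

lemma site_op_psi:
  assumes "\<sigma> \<in> configs n b" "x \<in> {1..b}"
    and "\<And>a. a \<le> n \<Longrightarrow> (\<Sum>k\<in>{0..n}. M a k * chi n q x z k) = \<mu> a * chi n q x z a"
  shows "site_op n M x \<psi> \<sigma> = \<mu> (\<sigma> x) * \<psi> \<sigma>"
  unfolding psi_eq_prodvec using assms by (rule site_op_prodvec)

lemma site_op_site_op_psi:
  assumes "\<sigma> \<in> configs n b" "x \<in> {1..b}" "x' \<in> {1..b}" "x \<noteq> x'"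
    and "\<And>a. a \<le> n \<Longrightarrow> (\<Sum>k\<in>{0..n}. M a k * chi n q x z k) = \<mu> a * chi n q x z a"
    and "\<And>a. a \<le> n \<Longrightarrow> (\<Sum>k\<in>{0..n}. M' a k * chi n q x' z k) = \<mu>' a * chi n q x' z a"
  shows "site_op n M x (site_op n M' x' \<psi>) \<sigma> = \<mu> (\<sigma> x) * \<mu>' (\<sigma> x') * \<psi> \<sigma>"
  unfolding psi_eq_prodvec using assms by (rule site_op_site_op_prodvec)

lemma S3_psi:
  assumes "\<sigma> \<in> configs n b" "x \<in> {1..b}"
  shows "S3 n x \<psi> \<sigma> = complex_of_real (mval n (\<sigma> x)) * \<psi> \<sigma>"
  by (rule site_op_psi[OF assms]) (rule S3m_chi)

lemma bond_energy_psi: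
  assumes \<sigma>: "\<sigma> \<in> configs n b" and x: "x \<in> {1..<b}"
  shows "complex_of_real (1 / \<Delta>) * (S1 n x (S1 n (x + 1) \<psi>) \<sigma> + S2 n x (S2 n (x + 1) \<psi>) \<sigma>)
      + S3 n x (S3 n (x + 1) \<psi>) \<sigma> - complex_of_real ((spin_j n)\<^sup>2) * \<psi> \<sigma>
    = - complex_of_real (spin_j n * Aconst \<Delta>)
        * (complex_of_real (mval n (\<sigma> x)) - complex_of_real (mval n (\<sigma> (x + 1)))) * \<psi> \<sigma>"
proof -
  have xx: "x \<in> {1..b}" "x + 1 \<in> {1..b}" "x \<noteq> x + 1" using x by auto
  have le: "\<sigma> x \<le> n" "\<sigma> (x + 1) \<le> n" using configs_le[OF \<sigma>] xx by auto
  let ?XY = "coherent_S1 n (site_param x) (\<sigma> x) * coherent_S1 n (site_param (x + 1)) (\<sigma> (x + 1))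
    + coherent_S2 n (site_param x) (\<sigma> x) * coherent_S2 n (site_param (x + 1)) (\<sigma> (x + 1))"
  have S1: "S1 n x (S1 n (x + 1) \<psi>) \<sigma>
      = coherent_S1 n (site_param x) (\<sigma> x) * coherent_S1 n (site_param (x + 1)) (\<sigma> (x + 1)) * \<psi> \<sigma>"
    by (rule site_op_site_op_psi[OF \<sigma> xx]; rule S1m_chi)
  have S2: "S2 n x (S2 n (x + 1) \<psi>) \<sigma>
      = coherent_S2 n (site_param x) (\<sigma> x) * coherent_S2 n (site_param (x + 1)) (\<sigma> (x + 1)) * \<psi> \<sigma>"
    by (rule site_op_site_op_psi[OF \<sigma> xx]; rule S2m_chi)
  have S3: "S3 n x (S3 n (x + 1) \<psi>) \<sigma>
      = complex_of_real (mval n (\<sigma> x)) * complex_of_real (mval n (\<sigma> (x + 1))) * \<psi> \<sigma>"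
    by (rule site_op_site_op_psi[OF \<sigma> xx]; rule S3m_chi)
  have "complex_of_real (1 / \<Delta>) * (S1 n x (S1 n (x + 1) \<psi>) \<sigma> + S2 n x (S2 n (x + 1) \<psi>) \<sigma>)
      + S3 n x (S3 n (x + 1) \<psi>) \<sigma> - complex_of_real ((spin_j n)\<^sup>2) * \<psi> \<sigma>
    = (complex_of_real (2 / (q + 1 / q)) * ?XY
        + complex_of_real (mval n (\<sigma> x) * mval n (\<sigma> (x + 1)) - (spin_j n)\<^sup>2)) * \<psi> \<sigma>"
    unfolding S1 S2 S3 q_plus_inverse by (simp add: algebra_simps)
  also note coherent_bond_identity[OF site_param_nonzero q_pos le, of x, folded site_param_Suc]
  finally show ?thesis
    unfolding Aconst_eq[OF q_pos q_less_1 q_plus_inverse] by simp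
qed

lemma field_energy_psi:
  assumes \<sigma>: "\<sigma> \<in> configs n b"
  shows "complex_of_real B1 * S1 n y \<psi> \<sigma> + complex_of_real B2 * S2 n y \<psi> \<sigma> + complex_of_real B3 * S3 n y \<psi> \<sigma>
    = complex_of_real E * \<psi> \<sigma>"
proof -
  have y: "y \<in> {1..b}" using y_ge_1 y_le_b by auto
  have S1: "S1 n y \<psi> \<sigma> = coherent_S1 n (site_param y) (\<sigma> y) * \<psi> \<sigma>"
    by (rule site_op_psi[OF \<sigma> y]; rule S1m_chi)
  have S2: "S2 n y \<psi> \<sigma> = coherent_S2 n (site_param y) (\<sigma> y) * \<psi> \<sigma>"
    by (rule site_op_psi[OF \<sigma> y]; rule S2m_chi)
  have "complex_of_real B1 * S1 n y \<psi> \<sigma> + complex_of_real B2 * S2 n y \<psi> \<sigma> + complex_of_real B3 * S3 n y \<psi> \<sigma>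
      = (complex_of_real B1 * coherent_S1 n (site_param y) (\<sigma> y) + complex_of_real B2 * coherent_S2 n (site_param y) (\<sigma> y)
         + complex_of_real (B3 * mval n (\<sigma> y))) * \<psi> \<sigma>"
    unfolding S1 S2 S3_psi[OF \<sigma> y] by (simp add: algebra_simps)
  also note coherent_field_identity[OF transverse_field configs_le[OF \<sigma> y], of B3, folded site_param_y]
  finally show ?thesis by simp
qed

lemma Hpm_psi:
  assumes \<sigma>: "\<sigma> \<in> configs n b"
  shows "Hpm n \<Delta> b y B1 B2 B3 \<psi> \<sigma> = complex_of_real E * \<psi> \<sigma>"
proof -
  let ?m = "\<lambda>x. complex_of_real (mval n (\<sigma> x))"
  let ?J = "complex_of_real (spin_j n * Aconst \<Delta>)"
  \<comment> \<open>the bond energies telescope and cancel the boundary term\<close>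
  have "(\<Sum>x\<in>{1..<b}. complex_of_real (1 / \<Delta>) * (S1 n x (S1 n (x + 1) \<psi>) \<sigma> + S2 n x (S2 n (x + 1) \<psi>) \<sigma>)
      + S3 n x (S3 n (x + 1) \<psi>) \<sigma> - complex_of_real ((spin_j n)\<^sup>2) * \<psi> \<sigma>)
      = (\<Sum>x\<in>{1..<b}. - ?J * (?m x - ?m (x + 1)) * \<psi> \<sigma>)"
    by (rule sum.cong[OF refl]) (rule bond_energy_psi[OF \<sigma>])
  also have "\<dots> = - ?J * (\<Sum>x\<in>{1..<b}. ?m x - ?m (x + 1)) * \<psi> \<sigma>"
    by (simp only: sum_distrib_left sum_distrib_right)
  also have "(\<Sum>x\<in>{1..<b}. ?m x - ?m (x + 1)) = ?m 1 - ?m b"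
    using sum_Suc_diff'[of 1 b "\<lambda>x. - ?m x"] y_ge_1 y_le_b by simp
  also have "- ?J * (?m 1 - ?m b) * \<psi> \<sigma> = - ?J * (S3 n 1 \<psi> \<sigma> - S3 n b \<psi> \<sigma>)"
    using y_ge_1 y_le_b by (simp add: S3_psi[OF \<sigma>] algebra_simps)
  finally have bonds: "(\<Sum>x\<in>{1..<b}. complex_of_real (1 / \<Delta>)
        * (S1 n x (S1 n (x + 1) \<psi>) \<sigma> + S2 n x (S2 n (x + 1) \<psi>) \<sigma>)
      + S3 n x (S3 n (x + 1) \<psi>) \<sigma> - complex_of_real ((spin_j n)\<^sup>2) * \<psi> \<sigma>)
      = - ?J * (S3 n 1 \<psi> \<sigma> - S3 n b \<psi> \<sigma>)" .
  have "Hpm n \<Delta> b y B1 B2 B3 \<psi> \<sigma> = - (\<Sum>x\<in>{1..<b}. complex_of_real (1 / \<Delta>)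
        * (S1 n x (S1 n (x + 1) \<psi>) \<sigma> + S2 n x (S2 n (x + 1) \<psi>) \<sigma>)
        + S3 n x (S3 n (x + 1) \<psi>) \<sigma> - complex_of_real ((spin_j n)\<^sup>2) * \<psi> \<sigma>)
      - ?J * (S3 n 1 \<psi> \<sigma> - S3 n b \<psi> \<sigma>)
      + (complex_of_real B1 * S1 n y \<psi> \<sigma> + complex_of_real B2 * S2 n y \<psi> \<sigma> + complex_of_real B3 * S3 n y \<psi> \<sigma>)"
    unfolding Hpm_def by (simp only: add.assoc)
  then show ?thesis
    unfolding bonds field_energy_psi[OF \<sigma>] by simp
qed

definition deviation :: "cfg \<Rightarrow> nat" where
  "deviation \<sigma> = (\<Sum>x\<in>{1..b}. n - \<sigma> x)"

definition amplitude :: "cfg \<Rightarrow> real" where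
  "amplitude \<sigma> = (\<Prod>x\<in>{1..b}. (1 + (cmod z)\<^sup>2 * (1 / q) ^ (2 * x)) powr (- spin_j n)
      * ((1 / q) ^ x) ^ (n - \<sigma> x) * wcoef n (\<sigma> x))"

lemma amplitude_pos: "\<sigma> \<in> configs n b \<Longrightarrow> amplitude \<sigma> > 0"
  unfolding amplitude_def wcoef_def
proof (intro prod_pos ballI mult_pos_pos)
  fix x assume "\<sigma> \<in> configs n b" "x \<in> {1..b}"
  then show "0 < sqrt (real (n choose \<sigma> x))" using configs_le by simp
  have "0 \<le> (cmod z)\<^sup>2 * (1 / q) ^ (2 * x)" using q_pos by simp
  then have "1 + (cmod z)\<^sup>2 * (1 / q) ^ (2 * x) \<noteq> 0" by linarith
  then show "0 < (1 + (cmod z)\<^sup>2 * (1 / q) ^ (2 * x)) powr - spin_j n" by simp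
qed (use q_pos in simp)

lemma psi_polar: "\<sigma> \<in> configs n b \<Longrightarrow> \<psi> \<sigma> = complex_of_real (amplitude \<sigma>) * z ^ deviation \<sigma>"
  unfolding psi_def amplitude_def deviation_def chi_def
  by (simp add: prod.distrib power_sum power_mult_distrib mult_ac)

lemma psi_nonzero: "\<sigma> \<in> configs n b \<Longrightarrow> \<psi> \<sigma> \<noteq> 0"
  using psi_polar amplitude_pos z_nonzero by fastforce

lemma deviation_agree_outside:
  assumes "X \<subseteq> {1..b}" "agree_outside X \<sigma> \<tau>"
  shows "deviation \<sigma> + (\<Sum>x\<in>X. n - \<tau> x) = deviation \<tau> + (\<Sum>x\<in>X. n - \<sigma> x)"
  using weighted_deviation_agree_outside[OF assms, where n = n and w = "\<lambda>_. 1"]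
  unfolding deviation_def by simp

lemma psi_gauge:
  assumes "\<sigma> \<in> configs n b" "\<tau> \<in> configs n b"
  shows "cnj (\<psi> \<sigma>) * \<psi> \<tau>
    = complex_of_real (amplitude \<sigma> * amplitude \<tau>) * (cnj z ^ deviation \<sigma> * z ^ deviation \<tau>)"
  using assms by (simp add: psi_polar)

lemma cnj_z_power_z_power: "cnj z ^ m * z ^ m = complex_of_real ((cmod z) ^ (2 * m))"
proof -
  have "cnj z ^ m * z ^ m = (cnj z * z) ^ m" by (simp add: power_mult_distrib)
  also have "cnj z * z = complex_of_real ((cmod z)\<^sup>2)" by (rule cnj_mult_self)
  finally show ?thesis by (simp add: power_mult)
qed

lemma \<beta>_z: "\<beta> * z = - complex_of_real ((N + B3) * q ^ y)"
proof -
  have "\<beta> * z = \<beta> * (- complex_of_real (N + B3) / \<beta>) * complex_of_real (q ^ y)"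
    unfolding z_def by (simp only: mult.assoc)
  also have "\<beta> * (- complex_of_real (N + B3) / \<beta>) = - complex_of_real (N + B3)"
    using \<beta>_nonzero by simp
  finally show ?thesis by (simp add: algebra_simps)
qed

lemma gauge_bond_nonneg:
  assumes \<sigma>: "\<sigma> \<in> configs n b" and \<tau>: "\<tau> \<in> configs n b" and x: "x \<in> {1..<b}"
  shows "0 \<le> cnj (\<psi> \<sigma>) * \<psi> \<tau> * bond_kernel (Spm n) (Smm n) x \<sigma> \<tau>"
proof (cases "agree_outside {x, x + 1} \<sigma> \<tau> \<and> \<sigma> x = Suc (\<tau> x) \<and> \<tau> (x + 1) = Suc (\<sigma> (x + 1))")
  case True
  have sites: "{x, x + 1} \<subseteq> {1..b}" using x by auto
  have "deviation \<sigma> + (\<Sum>x'\<in>{x, x + 1}. n - \<tau> x') = deviation \<tau> + (\<Sum>x'\<in>{x, x + 1}. n - \<sigma> x')"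
    using deviation_agree_outside[OF sites] True by blast
  then have "deviation \<sigma> + ((n - \<tau> x) + (n - \<tau> (x + 1))) = deviation \<tau> + ((n - \<sigma> x) + (n - \<sigma> (x + 1)))"
    by simp
  moreover have "\<sigma> x \<le> n" "\<tau> (x + 1) \<le> n" using configs_le \<sigma> \<tau> sites by auto
  ultimately have "deviation \<sigma> = deviation \<tau>" using True by arith
  moreover have "0 \<le> ladder n (\<tau> x) * ladder n (\<sigma> (x + 1))"
    using configs_le \<sigma> \<tau> sites by (simp add: ladder_nonneg)
  ultimately show ?thesis
    using True amplitude_pos[OF \<sigma>] amplitude_pos[OF \<tau>]
    by (simp add: psi_gauge[OF \<sigma> \<tau>] bond_kernel_Spm_Smm cnj_z_power_z_power less_eq_complex_def
        flip: of_real_mult)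
qed (auto simp: bond_kernel_Spm_Smm)

lemma gauge_bond_nonneg':
  assumes "\<sigma> \<in> configs n b" "\<tau> \<in> configs n b" "x \<in> {1..<b}"
  shows "0 \<le> cnj (\<psi> \<sigma>) * \<psi> \<tau> * bond_kernel (Smm n) (Spm n) x \<sigma> \<tau>"
proof -
  have "cnj (\<psi> \<sigma>) * \<psi> \<tau> * bond_kernel (Smm n) (Spm n) x \<sigma> \<tau>
      = cnj (cnj (\<psi> \<tau>) * \<psi> \<sigma> * bond_kernel (Spm n) (Smm n) x \<tau> \<sigma>)"
    by (simp add: bond_kernel_Smm_Spm bond_kernel_Spm_Smm)
  then show ?thesis using gauge_bond_nonneg[OF assms(2,1,3)] by (simp only: nonneg_cnj_iff)
qed

lemma gauge_field_nonpos:
  assumes \<sigma>: "\<sigma> \<in> configs n b" and \<tau>: "\<tau> \<in> configs n b"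
  shows "\<beta> * (cnj (\<psi> \<sigma>) * \<psi> \<tau>) * site_kernel (Spm n) y \<sigma> \<tau> \<le> 0"
proof (cases "agree_outside {y} \<sigma> \<tau> \<and> \<sigma> y = Suc (\<tau> y)")
  case True
  have y: "{y} \<subseteq> {1..b}" using y_ge_1 y_le_b by simp
  have "deviation \<sigma> + (\<Sum>x\<in>{y}. n - \<tau> x) = deviation \<tau> + (\<Sum>x\<in>{y}. n - \<sigma> x)"
    using deviation_agree_outside[OF y] True by blast
  then have "deviation \<sigma> + (n - \<tau> y) = deviation \<tau> + (n - \<sigma> y)" by simp
  moreover have "\<sigma> y \<le> n" using configs_le[OF \<sigma>] y by simp
  ultimately have "deviation \<tau> = Suc (deviation \<sigma>)" using True by arith
  then have "cnj (\<psi> \<sigma>) * \<psi> \<tau>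
      = complex_of_real (amplitude \<sigma> * amplitude \<tau>) * (cnj z ^ deviation \<sigma> * z ^ deviation \<sigma>) * z"
    unfolding psi_gauge[OF \<sigma> \<tau>] by (simp add: mult_ac)
  also have "\<dots> = complex_of_real (amplitude \<sigma> * amplitude \<tau> * (cmod z) ^ (2 * deviation \<sigma>)) * z"
    by (simp add: cnj_z_power_z_power)
  finally have gauge: "cnj (\<psi> \<sigma>) * \<psi> \<tau> = complex_of_real (amplitude \<sigma> * amplitude \<tau> * (cmod z) ^ (2 * deviation \<sigma>)) * z" .
  have "\<beta> * (cnj (\<psi> \<sigma>) * \<psi> \<tau>) * site_kernel (Spm n) y \<sigma> \<tau>
      = complex_of_real (amplitude \<sigma> * amplitude \<tau> * (cmod z) ^ (2 * deviation \<sigma>) * ladder n (\<tau> y)) * (\<beta> * z)"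
    unfolding gauge using True by (simp add: site_kernel_Spm mult_ac)
  also have "\<dots> = - complex_of_real (amplitude \<sigma> * amplitude \<tau> * (cmod z) ^ (2 * deviation \<sigma>) * ladder n (\<tau> y)
      * ((N + B3) * q ^ y))"
    unfolding \<beta>_z by simp
  finally show ?thesis
    using amplitude_pos[OF \<sigma>] amplitude_pos[OF \<tau>] N_plus_B3_pos q_pos ladder_nonneg[OF configs_le[OF \<tau>]] y
    by (simp add: less_eq_complex_def)
qed (auto simp: site_kernel_Spm)

lemma gauge_field_nonpos':
  assumes "\<sigma> \<in> configs n b" "\<tau> \<in> configs n b"
  shows "cnj \<beta> * (cnj (\<psi> \<sigma>) * \<psi> \<tau>) * site_kernel (Smm n) y \<sigma> \<tau> \<le> 0"
proof -
  have "cnj \<beta> * (cnj (\<psi> \<sigma>) * \<psi> \<tau>) * site_kernel (Smm n) y \<sigma> \<tau>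
      = cnj (\<beta> * (cnj (\<psi> \<tau>) * \<psi> \<sigma>) * site_kernel (Spm n) y \<tau> \<sigma>)"
    unfolding site_kernel_Smm by (simp add: cnj_site_kernel_Spm mult_ac)
  then show ?thesis using gauge_field_nonpos[OF assms(2,1)] by (simp only: nonpos_cnj_iff)
qed

lemma gauged_entry_off_diag:
  assumes "\<sigma> \<noteq> \<tau>"
  shows "cnj (\<psi> \<sigma>) * K \<sigma> \<tau> * \<psi> \<tau> =
    - complex_of_real (1 / (2 * \<Delta>)) * (\<Sum>x\<in>{1..<b}.
        cnj (\<psi> \<sigma>) * \<psi> \<tau> * bond_kernel (Spm n) (Smm n) x \<sigma> \<tau>
      + cnj (\<psi> \<sigma>) * \<psi> \<tau> * bond_kernel (Smm n) (Spm n) x \<sigma> \<tau>)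
    + (\<beta> * (cnj (\<psi> \<sigma>) * \<psi> \<tau>) * site_kernel (Spm n) y \<sigma> \<tau>
      + cnj \<beta> * (cnj (\<psi> \<sigma>) * \<psi> \<tau>) * site_kernel (Smm n) y \<sigma> \<tau>) / 2"
proof -
  have "Complex B1 B2 = cnj \<beta>" by (simp add: complex_eq_iff)
  then show ?thesis
    unfolding Hpm_kernel_off_diag[OF assms]
    by (simp add: sum_distrib_left algebra_simps)
qed

lemma gauged_entry_Re_Im:
  assumes \<sigma>: "\<sigma> \<in> configs n b" and \<tau>: "\<tau> \<in> configs n b" and "\<sigma> \<noteq> \<tau>"
  defines "G \<equiv> cnj (\<psi> \<sigma>) * \<psi> \<tau>"
  shows "Im (cnj (\<psi> \<sigma>) * K \<sigma> \<tau> * \<psi> \<tau>) = 0"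
    and "Re (cnj (\<psi> \<sigma>) * K \<sigma> \<tau> * \<psi> \<tau>) =
      - (1 / (2 * \<Delta>)) * (\<Sum>x\<in>{1..<b}. Re (G * bond_kernel (Spm n) (Smm n) x \<sigma> \<tau>)
        + Re (G * bond_kernel (Smm n) (Spm n) x \<sigma> \<tau>))
      + (Re (\<beta> * G * site_kernel (Spm n) y \<sigma> \<tau>) + Re (cnj \<beta> * G * site_kernel (Smm n) y \<sigma> \<tau>)) / 2"
proof -
  have "Im (G * bond_kernel (Spm n) (Smm n) x \<sigma> \<tau>) = 0" "Im (G * bond_kernel (Smm n) (Spm n) x \<sigma> \<tau>) = 0"
    if "x \<in> {1..<b}" for x
    using gauge_bond_nonneg[OF \<sigma> \<tau> that] gauge_bond_nonneg'[OF \<sigma> \<tau> that]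
    unfolding G_def less_eq_complex_def by simp_all
  moreover have "Im (\<beta> * G * site_kernel (Spm n) y \<sigma> \<tau>) = 0" "Im (cnj \<beta> * G * site_kernel (Smm n) y \<sigma> \<tau>) = 0"
    using gauge_field_nonpos[OF \<sigma> \<tau>] gauge_field_nonpos'[OF \<sigma> \<tau>]
    unfolding G_def less_eq_complex_def by simp_all
  ultimately show "Im (cnj (\<psi> \<sigma>) * K \<sigma> \<tau> * \<psi> \<tau>) = 0"
    unfolding gauged_entry_off_diag[OF assms(3)] G_def[symmetric] by (simp add: Im_sum)
  show "Re (cnj (\<psi> \<sigma>) * K \<sigma> \<tau> * \<psi> \<tau>) = - (1 / (2 * \<Delta>)) * (\<Sum>x\<in>{1..<b}. Re (G * bond_kernel (Spm n) (Smm n) x \<sigma> \<tau>)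
        + Re (G * bond_kernel (Smm n) (Spm n) x \<sigma> \<tau>))
      + (Re (\<beta> * G * site_kernel (Spm n) y \<sigma> \<tau>) + Re (cnj \<beta> * G * site_kernel (Smm n) y \<sigma> \<tau>)) / 2"
    unfolding gauged_entry_off_diag[OF assms(3)] G_def[symmetric] by (simp add: Re_sum)
qed

lemma gauged_entry_nonpos:
  assumes \<sigma>: "\<sigma> \<in> configs n b" and \<tau>: "\<tau> \<in> configs n b" and "\<sigma> \<noteq> \<tau>"
  shows "cnj (\<psi> \<sigma>) * K \<sigma> \<tau> * \<psi> \<tau> \<le> 0"
proof -
  let ?G = "cnj (\<psi> \<sigma>) * \<psi> \<tau>"
  have "0 \<le> (\<Sum>x\<in>{1..<b}. Re (?G * bond_kernel (Spm n) (Smm n) x \<sigma> \<tau>) + Re (?G * bond_kernel (Smm n) (Spm n) x \<sigma> \<tau>))"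
    using gauge_bond_nonneg[OF \<sigma> \<tau>] gauge_bond_nonneg'[OF \<sigma> \<tau>]
    by (intro sum_nonneg) (simp add: less_eq_complex_def)
  then have "0 \<le> 1 / (2 * \<Delta>) * (\<Sum>x\<in>{1..<b}. Re (?G * bond_kernel (Spm n) (Smm n) x \<sigma> \<tau>)
      + Re (?G * bond_kernel (Smm n) (Spm n) x \<sigma> \<tau>))"
    using \<Delta>_gt_1 by simp
  moreover have "Re (\<beta> * ?G * site_kernel (Spm n) y \<sigma> \<tau>) \<le> 0" "Re (cnj \<beta> * ?G * site_kernel (Smm n) y \<sigma> \<tau>) \<le> 0"
    using gauge_field_nonpos[OF \<sigma> \<tau>] gauge_field_nonpos'[OF \<sigma> \<tau>] by (simp_all add: less_eq_complex_def)
  ultimately show ?thesis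
    using gauged_entry_Re_Im[OF assms] unfolding less_eq_complex_def by simp
qed

lemma gauged_entry_Re_neg:
  assumes \<sigma>: "\<sigma> \<in> configs n b" and \<tau>: "\<tau> \<in> configs n b" and "\<sigma> \<noteq> \<tau>"
    and edge: "site_kernel (Smm n) y \<sigma> \<tau> \<noteq> 0 \<or> (\<exists>x\<in>{1..<b}.
      bond_kernel (Spm n) (Smm n) x \<sigma> \<tau> \<noteq> 0 \<or> bond_kernel (Smm n) (Spm n) x \<sigma> \<tau> \<noteq> 0)"
  shows "Re (cnj (\<psi> \<sigma>) * K \<sigma> \<tau> * \<psi> \<tau>) < 0"
proof -
  let ?G = "cnj (\<psi> \<sigma>) * \<psi> \<tau>"
  let ?a = "\<lambda>x. Re (?G * bond_kernel (Spm n) (Smm n) x \<sigma> \<tau>) + Re (?G * bond_kernel (Smm n) (Spm n) x \<sigma> \<tau>)"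
  let ?f = "Re (\<beta> * ?G * site_kernel (Spm n) y \<sigma> \<tau>)" and ?f' = "Re (cnj \<beta> * ?G * site_kernel (Smm n) y \<sigma> \<tau>)"
  have G: "?G \<noteq> 0" using psi_nonzero \<sigma> \<tau> by simp
  have a_nonneg: "0 \<le> ?a x" if "x \<in> {1..<b}" for x
    using gauge_bond_nonneg[OF \<sigma> \<tau> that] gauge_bond_nonneg'[OF \<sigma> \<tau> that] by (simp add: less_eq_complex_def)
  have f: "?f \<le> 0" "?f' \<le> 0"
    using gauge_field_nonpos[OF \<sigma> \<tau>] gauge_field_nonpos'[OF \<sigma> \<tau>] by (simp_all add: less_eq_complex_def)
  define P where "P = 1 / (2 * \<Delta>) * (\<Sum>x\<in>{1..<b}. ?a x)"
  have "0 < P \<or> ?f' < 0"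
  proof (cases "site_kernel (Smm n) y \<sigma> \<tau> \<noteq> 0")
    case True
    then show ?thesis
      using Re_neg_if_nonpos_nonzero[OF gauge_field_nonpos'[OF \<sigma> \<tau>]] G \<beta>_nonzero by simp
  next
    case False
    then obtain x where x: "x \<in> {1..<b}"
      and "bond_kernel (Spm n) (Smm n) x \<sigma> \<tau> \<noteq> 0 \<or> bond_kernel (Smm n) (Spm n) x \<sigma> \<tau> \<noteq> 0"
      using edge by blast
    then have "0 < Re (?G * bond_kernel (Spm n) (Smm n) x \<sigma> \<tau>) \<or> 0 < Re (?G * bond_kernel (Smm n) (Spm n) x \<sigma> \<tau>)"
      using Re_pos_if_nonneg_nonzero[OF gauge_bond_nonneg[OF \<sigma> \<tau> x]]
        Re_pos_if_nonneg_nonzero[OF gauge_bond_nonneg'[OF \<sigma> \<tau> x]] G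
      by auto
    moreover have "0 \<le> Re (?G * bond_kernel (Spm n) (Smm n) x \<sigma> \<tau>)" "0 \<le> Re (?G * bond_kernel (Smm n) (Spm n) x \<sigma> \<tau>)"
      using gauge_bond_nonneg[OF \<sigma> \<tau> x] gauge_bond_nonneg'[OF \<sigma> \<tau> x] by (simp_all add: less_eq_complex_def)
    ultimately have "0 < ?a x" by linarith
    then have "0 < (\<Sum>x\<in>{1..<b}. ?a x)"
      using a_nonneg x by (intro sum_pos2) auto
    then show ?thesis unfolding P_def using \<Delta>_gt_1 by simp
  qed
  moreover have "0 \<le> P"
    unfolding P_def using \<Delta>_gt_1 by (intro mult_nonneg_nonneg sum_nonneg a_nonneg) auto
  moreover have "Re (cnj (\<psi> \<sigma>) * K \<sigma> \<tau> * \<psi> \<tau>) = - P + (?f + ?f') / 2"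
    unfolding P_def gauged_entry_Re_Im(2)[OF assms(1-3)] by simp
  ultimately show ?thesis using f by argo
qed

definition all_up :: cfg where
  "all_up = restrict (\<lambda>_. n) {1..b}"

text \<open>The distance |x - y| to the field site, written with truncated subtraction.\<close>
definition field_distance :: "nat \<Rightarrow> nat" where
  "field_distance x = (x - y) + (y - x)"

definition potential :: "cfg \<Rightarrow> nat" where
  "potential \<sigma> = (\<Sum>x\<in>{1..b}. (n - \<sigma> x) * (field_distance x + 1))"

lemma all_up_in_configs: "all_up \<in> configs n b"
  unfolding all_up_def configs_def by auto

lemma raise_at_field_site:
  assumes \<sigma>: "\<sigma> \<in> configs n b" and "\<sigma> y < n"
  shows "\<exists>\<tau>\<in>configs n b. Re (cnj (\<psi> \<sigma>) * K \<sigma> \<tau> * \<psi> \<tau>) < 0 \<and> potential \<tau> < potential \<sigma>"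
proof -
  define \<tau> where "\<tau> = \<sigma>(y := Suc (\<sigma> y))"
  have y: "y \<in> {1..b}" using y_ge_1 y_le_b by simp
  have \<tau>: "\<tau> \<in> configs n b" unfolding \<tau>_def using assms y by (intro configs_upd) auto
  have "site_kernel (Smm n) y \<sigma> \<tau> = complex_of_real (ladder n (\<sigma> y))"
    unfolding site_kernel_Smm site_kernel_Spm \<tau>_def agree_outside_def by simp
  then have "site_kernel (Smm n) y \<sigma> \<tau> \<noteq> 0" using ladder_pos[of "\<sigma> y" n] assms by simp
  moreover have "\<sigma> \<noteq> \<tau>" unfolding \<tau>_def by (auto simp: fun_eq_iff)
  moreover have "potential \<tau> < potential \<sigma>"
    using weighted_deviation_agree_outside[of "{y}" b \<sigma> \<tau> n "\<lambda>x. field_distance x + 1"] y assms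
    unfolding potential_def \<tau>_def agree_outside_def field_distance_def by simp
  ultimately show ?thesis using gauged_entry_Re_neg[OF \<sigma> \<tau>] \<tau> by blast
qed

lemma hop_toward_field:
  assumes \<sigma>: "\<sigma> \<in> configs n b" and x: "x \<in> {1..b}" "x' \<in> {1..b}" and adjacent: "x' = x + 1 \<or> x = x' + 1"
    and lowered: "\<sigma> x < n" and full: "\<sigma> x' = n" and closer: "field_distance x = Suc (field_distance x')"
  shows "\<exists>\<tau>\<in>configs n b. Re (cnj (\<psi> \<sigma>) * K \<sigma> \<tau> * \<psi> \<tau>) < 0 \<and> potential \<tau> < potential \<sigma>"
proof -
  define \<tau> where "\<tau> = \<sigma>(x := Suc (\<sigma> x), x' := n - 1)"
  have "x \<noteq> x'" using adjacent by auto
  have \<tau>: "\<tau> \<in> configs n b" unfolding \<tau>_def using assms by (intro configs_upd) auto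
  have agree: "agree_outside {x, x'} \<sigma> \<tau>" unfolding \<tau>_def agree_outside_def by simp
  have "{x, x'} \<subseteq> {1..b}" using x by simp
  from weighted_deviation_agree_outside[OF this agree, where n = n and w = "\<lambda>x. field_distance x + 1"]
  have "potential \<sigma> + ((n - \<tau> x) * (field_distance x + 1) + (n - \<tau> x') * (field_distance x' + 1))
      = potential \<tau> + ((n - \<sigma> x) * (field_distance x + 1) + (n - \<sigma> x') * (field_distance x' + 1))"
    unfolding potential_def using \<open>x \<noteq> x'\<close> by simp
  moreover have "\<tau> x = Suc (\<sigma> x)" "n - \<tau> x' = 1" unfolding \<tau>_def using \<open>x \<noteq> x'\<close> n_pos by auto
  moreover obtain k where "n - \<sigma> x = Suc k" "n - Suc (\<sigma> x) = k" using lowered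
    by (metis Suc_diff_Suc)
  ultimately have "potential \<tau> < potential \<sigma>" using full closer by simp
  moreover have "\<exists>w\<in>{1..<b}. bond_kernel (Spm n) (Smm n) w \<sigma> \<tau> \<noteq> 0 \<or> bond_kernel (Smm n) (Spm n) w \<sigma> \<tau> \<noteq> 0"
    using adjacent
  proof
    assume x': "x' = x + 1"
    then have "bond_kernel (Smm n) (Spm n) x \<sigma> \<tau> = complex_of_real (ladder n (\<sigma> x) * ladder n (n - 1))"
      using agree full n_pos unfolding bond_kernel_Smm_Spm bond_kernel_Spm_Smm \<tau>_def
      by (auto simp: agree_outside_sym)
    then show ?thesis
      using ladder_pos[of "\<sigma> x" n] ladder_pos[of "n - 1" n] lowered n_pos x x' by force
  next
    assume x: "x = x' + 1"
    then have "bond_kernel (Spm n) (Smm n) x' \<sigma> \<tau> = complex_of_real (ladder n (n - 1) * ladder n (\<sigma> x))"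
      using agree full n_pos unfolding bond_kernel_Spm_Smm \<tau>_def by (auto simp: insert_commute)
    then show ?thesis
      using ladder_pos[of "\<sigma> x" n] ladder_pos[of "n - 1" n] lowered n_pos x \<open>x \<in> {1..b}\<close> \<open>x' \<in> {1..b}\<close>
      by force
  qed
  moreover have "\<sigma> \<noteq> \<tau>" unfolding \<tau>_def using \<open>x \<noteq> x'\<close> by (auto simp: fun_eq_iff)
  ultimately show ?thesis using gauged_entry_Re_neg[OF \<sigma> \<tau>] \<tau> by blast
qed

lemma descent_to_all_up:
  assumes \<sigma>: "\<sigma> \<in> configs n b" and "\<sigma> \<noteq> all_up"
  shows "\<exists>\<tau>\<in>configs n b. Re (cnj (\<psi> \<sigma>) * K \<sigma> \<tau> * \<psi> \<tau>) < 0 \<and> potential \<tau> < potential \<sigma>"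
proof -
  have "\<exists>x\<in>{1..b}. \<sigma> x < n"
  proof (rule ccontr)
    assume "\<not> ?thesis"
    then have "\<sigma> x = all_up x" if "x \<in> {1..b}" for x
      using that configs_le[OF \<sigma>] unfolding all_up_def by force
    then show False
      using configs_eqI[OF \<sigma> all_up_in_configs] \<open>\<sigma> \<noteq> all_up\<close> by blast
  qed
  \<comment> \<open>a non-full site closest to y; its neighbour towards y is then full\<close>
  then obtain x where x: "x \<in> {1..b}" "\<sigma> x < n"
    and closest: "\<And>x'. x' \<in> {1..b} \<Longrightarrow> \<sigma> x' < n \<Longrightarrow> field_distance x \<le> field_distance x'"
    using ex_has_least_nat[of "\<lambda>x. x \<in> {1..b} \<and> \<sigma> x < n" _ field_distance] by blast
  have full: "\<sigma> x' = n" if "x' \<in> {1..b}" "field_distance x = Suc (field_distance x')" for x'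
    using closest[OF that(1)] that configs_le[OF \<sigma> that(1)] by fastforce
  consider "x = y" | "x < y" | "y < x" by linarith
  then show ?thesis
  proof cases
    case 1
    then show ?thesis using raise_at_field_site[OF \<sigma>] x by simp
  next
    case 2
    then have x': "x + 1 \<in> {1..b}" "field_distance x = Suc (field_distance (x + 1))"
      using x y_le_b unfolding field_distance_def by auto
    show ?thesis by (rule hop_toward_field[OF \<sigma> x(1) x'(1) _ x(2) full[OF x'] x'(2)]) simp
  next
    case 3
    then have x': "x - 1 \<in> {1..b}" "field_distance x = Suc (field_distance (x - 1))"
      using x y_ge_1 unfolding field_distance_def by auto
    show ?thesis by (rule hop_toward_field[OF \<sigma> x(1) x'(1) _ x(2) full[OF x'] x'(2)]) (use 3 in simp)
  qed
qed

sublocale gauge_stoquastic "configs n b" K \<psi> E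
proof
  show "finite (configs n b)" by (rule finite_configs)
  show "\<psi> \<sigma> \<noteq> 0" if "\<sigma> \<in> configs n b" for \<sigma> using that by (rule psi_nonzero)
  show "(\<Sum>\<tau>\<in>configs n b. K \<sigma> \<tau> * \<psi> \<tau>) = complex_of_real E * \<psi> \<sigma>" if "\<sigma> \<in> configs n b" for \<sigma>
    using Hpm_eq_kernel_sum[OF that y_ge_1 y_le_b] Hpm_psi[OF that] by simp
  show "K \<tau> \<sigma> = cnj (K \<sigma> \<tau>)" for \<sigma> \<tau> by (rule Hpm_kernel_hermitian)
  show "cnj (\<psi> \<sigma>) * K \<sigma> \<tau> * \<psi> \<tau> \<le> 0"
    if "\<sigma> \<in> configs n b" "\<tau> \<in> configs n b" "\<sigma> \<noteq> \<tau>" for \<sigma> \<tau>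
    using that by (rule gauged_entry_nonpos)
qed

lemma Hpm_eigen_iff:
  "is_eigen n b (Hpm n \<Delta> b y B1 B2 B3) e v \<longleftrightarrow> in_space n b v \<and> (\<exists>\<sigma>\<in>configs n b. v \<sigma> \<noteq> 0)
    \<and> (\<forall>\<sigma>\<in>configs n b. (\<Sum>\<tau>\<in>configs n b. K \<sigma> \<tau> * v \<tau>) = e * v \<sigma>)"
  unfolding is_eigen_def using Hpm_eq_kernel_sum[OF _ y_ge_1 y_le_b] by simp

lemma psi_is_eigen: "is_eigen n b (Hpm n \<Delta> b y B1 B2 B3) (complex_of_real E) \<psi>"
  unfolding is_eigen_def in_space_def
  using Hpm_psi psi_nonzero[OF all_up_in_configs] all_up_in_configs by (auto simp: psi_def)

lemma eigenvalue_lower_bound: "is_eigen n b (Hpm n \<Delta> b y B1 B2 B3) e v \<Longrightarrow> E \<le> Re e"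
  unfolding Hpm_eigen_iff using eigenvalue_ge by blast

lemma ground_state_unique:
  assumes "is_eigen n b (Hpm n \<Delta> b y B1 B2 B3) (complex_of_real E) v"
  shows "\<exists>c. \<forall>\<sigma>\<in>configs n b. v \<sigma> = c * \<psi> \<sigma>"
  using ground_state_proportional[of v all_up potential] assms descent_to_all_up
  unfolding Hpm_eigen_iff weight_def by blast

end

theorem proposition2p1:
  fixes n b y :: nat and \<Delta> B1 B2 B3 :: real
  assumes "n \<ge> 1" and "\<Delta> > 1" and "b \<ge> 1" and "1 \<le> y" and "y \<le> b"
    and "B1\<^sup>2 + B2\<^sup>2 > 0"
  defines "q \<equiv> qpar \<Delta>"
  defines "H \<equiv> Hpm n \<Delta> b y B1 B2 B3"
  defines "E \<equiv> - spin_j n * normB B1 B2 B3"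
  defines "z \<equiv> - complex_of_real (normB B1 B2 B3 + B3) / Complex B1 (- B2)
                * complex_of_real (q ^ y)"
  shows "is_eigen n b H (complex_of_real E) (psi n q b z)
     \<and> (\<forall>ev v. is_eigen n b H ev v \<longrightarrow> E \<le> Re ev)
     \<and> (\<forall>v. is_eigen n b H (complex_of_real E) v \<longrightarrow>
            (\<exists>c. \<forall>\<sigma>\<in>configs n b. v \<sigma> = c * psi n q b z \<sigma>))"
proof -
  interpret chain: kink_chain n b y \<Delta> B1 B2 B3
    using assms(1,2,4-6) by unfold_locales
  have "z = chain.z" unfolding z_def q_def chain.z_def ..
  then show ?thesis
    unfolding q_def H_def E_def
    using chain.psi_is_eigen chain.eigenvalue_lower_bound chain.ground_state_unique by blast
qed

end
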